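(* Let $x\in\mathbb C^n\setminus\Delta$ be such that the weighted arrangement $(\mathcal A(x),a)$ is unbalanced. Then for every $j\in J$ the operator of multiplication by $[a_j/f_j]$ in $\mathcal O(C_{\mathcal A(x),a})$ equals the operator $K_j(x)$; that is, for every $k$-element sequence $i_1,\dots,i_k$ in $J$, $$\Big[\frac{a_j}{f_j}\Big]\cdot w_{i_1,\dots,i_k}=K_j(x)\,w_{i_1,\dots,i_k}.$$
   Context: Let $0<k<n$, $J=\{1,\dots,n\}$. On $\mathbb C^k$ (coordinates $t_1,\dots,t_k$) fix nonzero linear functions $g_j=b^1_jt_1+\dots+b^k_jt_k$, $j\in J$, spanning $(\mathbb C^k)^*$. For $x\in\mathbb C^n$, $\mathcal A(x)$ is the arrangement in $\mathbb C^k$ of hyperplanes $H_j(x)=\{f_j=0\}$, $f_j=g_j+x_j$, with complement $U(\mathcal A(x))$. For $I=\{i_1,\dots,i_k\}$ (ordered) let $d_{i_1,\dots,i_k}=\det_{i,l=1}^k(b^i_{i_l})$. Circuits and discriminant: a subset $C\subset J$ is a circuit if $(g_i)_{i\in C}$ are linearly dependent but every proper subset is independent. For each circuit $C$ fix a nonzero collection $(\lambda^C_i)_{i\in J}$, $\lambda^C_i=0$ for $i\notin C$, with $\sum_i\lambda^C_ig_i=0$, and set $f_C(z)=\sum_i\lambda^C_iz_i$. The discriminant is $\Delta=\bigcup_C\{f_C=0\}\subset\mathbb C^n$; for $x\notin\Delta$, $\mathcal A(x)$ has normal crossings. A subset of $J$ is independent if the corresponding $g_i$ are linearly independent. Weights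 $a\in(\mathbb C^\times)^n$; $\Phi=\sum_ja_j\log f_j$. $\mathcal O(C_{\mathcal A(x),a})=\mathcal O(U(\mathcal A(x)))/I$, with $I$ the ideal generated by $\partial\Phi/\partial t_i=\sum_jb^i_ja_j/f_j$, $i=1,\dots,k$; $[f]$ is the class of $f$. Marked elements: $w_{i_1,\dots,i_k}=d_{i_1,\dots,i_k}\,[a_{i_1}/f_{i_1}]\cdots[a_{i_k}/f_{i_k}]\in\mathcal O(C_{\mathcal A(x),a})$; they are skew-symmetric in the indices and vanish for dependent index sets, and (for unbalanced weight) they span $\mathcal O(C_{\mathcal A(x),a})$. Operators: for a circuit $C$, listed in some order as $i_1,\dots,i_r$, and $C_m=C\setminus\{i_m\}$, define $L_C$ on marked elements: $L_C(w_{j_1,\dots,j_k})=0$ if $|\{j_1,\dots,j_k\}\cap C|<r-1$; if $\{j_1,\dots,j_k\}\cap C=C_m$, write (using skew-symmetry) $w_{j_1,\dots,j_k}=\pm w_{i_1,\dots,\widehat{i_m},\dots,i_r,s_1,\dots,s_{k-r+1}}$ with $\{s_1,\dots,s_{k-r+1}\}=\{j_1,\dots,j_k\}\setminus C_m$, and set $L_C(w_{i_1,\dots,\widehat{i_m},\dots,i_r,s_1,\dots,s_{k-r+1}})=(-1)^m\sum_{l=1}^r(-1)^la_{i_l}w_{i_1,\dots,\widehat{i_l},\dots,i_r,s_1,\dots,s_{k-r+1}}$. Then $K_j(x)=\sum_{C}\frac{\lambda^C_j}{f_C(x)}L_C$, the sum over all circuits. Unbalanced: for an arrangement in $\mathbb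 C^k$ with weights $a_j$, adjoin $H_\infty=\mathbb P^k\setminus\mathbb C^k$ with weight $-\sum_ja_j$; the weight of an edge (nonempty intersection of hyperplanes) is the sum of the weights of the hyperplanes containing it; an edge is dense if the hyperplanes containing it form an irreducible arrangement (not splittable, after a coordinate change, into two nonempty groups in disjoint coordinates). The weighted arrangement is unbalanced if no dense edge of the projective arrangement has weight $0$. *)

theory Defs
  imports Complex_Main "HOL-Combinatorics.Permutations"
begin

text \<open>J = {1..n}. Points of C^k are functions t :: nat => complex
  (coordinates t 1, ..., t k). The linear function g_j is given by its
  coefficients b i j = b^i_j (i in {1..k}). Sequences i_1..i_k are lists of length k.\<close>

definition gfun :: "nat \<Rightarrow> (nat \<Rightarrow> nat \<Rightarrow> complex) \<Rightarrow> nat \<Rightarrow> (nat \<Rightarrow> complex) \<Rightarrow> complex" where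
  "gfun k b j t = (\<Sum>i=1..k. b i j * t i)"

definition ffun :: "nat \<Rightarrow> (nat \<Rightarrow> nat \<Rightarrow> complex) \<Rightarrow> (nat \<Rightarrow> complex) \<Rightarrow> nat \<Rightarrow> (nat \<Rightarrow> complex) \<Rightarrow> complex" where
  "ffun k b x j t = gfun k b j t + x j"

definition cspace :: "nat \<Rightarrow> (nat \<Rightarrow> complex) set" where
  "cspace k = {t. \<forall>i. i \<notin> {1..k} \<longrightarrow> t i = 0}"

definition complU :: "nat \<Rightarrow> nat \<Rightarrow> (nat \<Rightarrow> nat \<Rightarrow> complex) \<Rightarrow> (nat \<Rightarrow> complex) \<Rightarrow> (nat \<Rightarrow> complex) set" where
  "complU k n b x = {t \<in> cspace k. \<forall>j\<in>{1..n}. ffun k b x j t \<noteq> 0}"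

text \<open>Regular functions on U(A(x)): the C-algebra generated by the coordinate functions and
  the functions 1/f_j (U is the principal open set where prod f_j is nonzero).\<close>
inductive_set regfun :: "nat \<Rightarrow> nat \<Rightarrow> (nat \<Rightarrow> nat \<Rightarrow> complex) \<Rightarrow> (nat \<Rightarrow> complex)
    \<Rightarrow> ((nat \<Rightarrow> complex) \<Rightarrow> complex) set"
  for k n b x where
  rf_const: "(\<lambda>t. c) \<in> regfun k n b x"
| rf_coord: "i \<in> {1..k} \<Longrightarrow> (\<lambda>t. t i) \<in> regfun k n b x"
| rf_inv: "j \<in> {1..n} \<Longrightarrow> (\<lambda>t. 1 / ffun k b x j t) \<in> regfun k n b x"
| rf_add: "p \<in> regfun k n b x \<Longrightarrow> q \<in> regfun k n b x \<Longrightarrow> (\<lambda>t. p t + q t) \<in> regfun k n b x"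
| rf_mult: "p \<in> regfun k n b x \<Longrightarrow> q \<in> regfun k n b x \<Longrightarrow> (\<lambda>t. p t * q t) \<in> regfun k n b x"

definition dPhi :: "nat \<Rightarrow> nat \<Rightarrow> (nat \<Rightarrow> nat \<Rightarrow> complex) \<Rightarrow> (nat \<Rightarrow> complex) \<Rightarrow> (nat \<Rightarrow> complex)
    \<Rightarrow> nat \<Rightarrow> (nat \<Rightarrow> complex) \<Rightarrow> complex" where
  "dPhi k n b x a i t = (\<Sum>j=1..n. b i j * a j / ffun k b x j t)"

text \<open>Two regular functions have the same class in O(C_{A(x),a}) = O(U)/I iff their difference
  lies in the ideal I generated by the dPhi/dt_i, i.e. is of the form sum_i c_i dPhi/dt_i with
  c_i regular (equality of functions on U).\<close>
definition same_class :: "nat \<Rightarrow> nat \<Rightarrow> (nat \<Rightarrow> nat \<Rightarrow> complex) \<Rightarrow> (nat \<Rightarrow> complex) \<Rightarrow> (nat \<Rightarrow> complex)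
    \<Rightarrow> ((nat \<Rightarrow> complex) \<Rightarrow> complex) \<Rightarrow> ((nat \<Rightarrow> complex) \<Rightarrow> complex) \<Rightarrow> bool" where
  "same_class k n b x a p q \<longleftrightarrow>
     (\<exists>c :: nat \<Rightarrow> (nat \<Rightarrow> complex) \<Rightarrow> complex.
        (\<forall>i\<in>{1..k}. c i \<in> regfun k n b x) \<and>
        (\<forall>t\<in>complU k n b x. p t - q t = (\<Sum>i=1..k. c i t * dPhi k n b x a i t)))"

definition dcoef :: "nat \<Rightarrow> (nat \<Rightarrow> nat \<Rightarrow> complex) \<Rightarrow> nat list \<Rightarrow> complex" where
  "dcoef k b js = (\<Sum>p | p permutes {0..<k}.
      of_int (sign p) * (\<Prod>i<k. b (Suc i) (js ! (p i))))"

text \<open>Representative in O(U) of the marked element w_{i_1..i_k}.\<close>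
definition wfun :: "nat \<Rightarrow> (nat \<Rightarrow> nat \<Rightarrow> complex) \<Rightarrow> (nat \<Rightarrow> complex) \<Rightarrow> (nat \<Rightarrow> complex)
    \<Rightarrow> nat list \<Rightarrow> (nat \<Rightarrow> complex) \<Rightarrow> complex" where
  "wfun k b x a js t = dcoef k b js * (\<Prod>l<length js. a (js ! l) / ffun k b x (js ! l) t)"

definition indep_set :: "nat \<Rightarrow> (nat \<Rightarrow> nat \<Rightarrow> complex) \<Rightarrow> nat set \<Rightarrow> bool" where
  "indep_set k b S \<longleftrightarrow>
     (\<forall>c :: nat \<Rightarrow> complex. (\<forall>i\<in>{1..k}. (\<Sum>j\<in>S. c j * b i j) = 0) \<longrightarrow> (\<forall>j\<in>S. c j = 0))"

definition circuit :: "nat \<Rightarrow> nat \<Rightarrow> (nat \<Rightarrow> nat \<Rightarrow> complex) \<Rightarrow> nat set \<Rightarrow> bool" where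
  "circuit k n b C \<longleftrightarrow> C \<subseteq> {1..n} \<and> \<not> indep_set k b C \<and> (\<forall>D. D \<subset> C \<longrightarrow> indep_set k b D)"

definition fC :: "(nat set \<Rightarrow> nat \<Rightarrow> complex) \<Rightarrow> nat \<Rightarrow> nat set \<Rightarrow> (nat \<Rightarrow> complex) \<Rightarrow> complex" where
  "fC lam n C z = (\<Sum>i=1..n. lam C i * z i)"

text \<open>Sign relating w_{js} to w_{seq} when js is a rearrangement of the distinct list seq:
  (-1)^(number of inversions).\<close>
definition rearr_sign :: "nat list \<Rightarrow> nat list \<Rightarrow> complex" where
  "rearr_sign js sq = (-1) ^ card {(p, q). p < q \<and> q < length js \<and>
       (\<exists>p' q'. q' < p' \<and> p' < length sq \<and> sq ! p' = js ! p \<and> sq ! q' = js ! q)}"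

text \<open>The circuit C is listed
  increasingly as i_1 < ... < i_r (cs ! (l-1) = i_l). If js is not distinct, or contains all of C,
  then w_{js} = 0 and the value is 0. If set js \<inter> C = C_m (m = m0+1) the paper's formula is used
  after rewriting w_{js} = \<plusminus> w_{i_1..\<widehat>i_m..i_r, s_1..s_{k-r+1}}, the s's taken in the order
  in which they occur in js.\<close>
definition LC :: "nat \<Rightarrow> (nat \<Rightarrow> nat \<Rightarrow> complex) \<Rightarrow> (nat \<Rightarrow> complex) \<Rightarrow> (nat \<Rightarrow> complex)
    \<Rightarrow> nat set \<Rightarrow> nat list \<Rightarrow> (nat \<Rightarrow> complex) \<Rightarrow> complex" where
  "LC k b x a C js t =
    (let cs = sorted_list_of_set C; r = length cs; ss = filter (\<lambda>j. j \<notin> C) js;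
         omit = (\<lambda>l. take l cs @ drop (Suc l) cs)
     in if distinct js \<and> (\<exists>m0<r. set js \<inter> C = C - {cs ! m0})
        then (let m0 = (THE m0. m0 < r \<and> set js \<inter> C = C - {cs ! m0})
              in rearr_sign js (omit m0 @ ss) * (-1) ^ (Suc m0) *
                 (\<Sum>l<r. (-1) ^ (Suc l) * a (cs ! l) * wfun k b x a (omit l @ ss) t))
        else 0)"

definition Kop :: "nat \<Rightarrow> nat \<Rightarrow> (nat \<Rightarrow> nat \<Rightarrow> complex) \<Rightarrow> (nat \<Rightarrow> complex) \<Rightarrow> (nat \<Rightarrow> complex)
    \<Rightarrow> (nat set \<Rightarrow> nat \<Rightarrow> complex) \<Rightarrow> nat \<Rightarrow> nat list \<Rightarrow> (nat \<Rightarrow> complex) \<Rightarrow> complex" where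
  "Kop k n b x a lam j js t =
     (\<Sum>C | circuit k n b C. lam C j / fC lam n C x * LC k b x a C js t)"

text \<open>Projective arrangement in P^k, homogeneous coordinates v 0, v 1, ..., v k (t_i = v i / v 0).
  Index 0 stands for H_infinity = {v 0 = 0}; index j in {1..n} for the closure of H_j(x),
  given by the linear form x_j v_0 + sum_i b^i_j v_i.\<close>
definition pcoef :: "(nat \<Rightarrow> nat \<Rightarrow> complex) \<Rightarrow> (nat \<Rightarrow> complex) \<Rightarrow> nat \<Rightarrow> nat \<Rightarrow> complex" where
  "pcoef b x m q = (if m = 0 then (if q = 0 then 1 else 0) else (if q = 0 then x m else b q m))"

definition pform :: "nat \<Rightarrow> (nat \<Rightarrow> nat \<Rightarrow> complex) \<Rightarrow> (nat \<Rightarrow> complex) \<Rightarrow> nat \<Rightarrow> (nat \<Rightarrow> complex) \<Rightarrow> complex" where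
  "pform k b x m v = (\<Sum>q=0..k. pcoef b x m q * v q)"

definition hspace :: "nat \<Rightarrow> (nat \<Rightarrow> complex) set" where
  "hspace k = {v. \<forall>q. q > k \<longrightarrow> v q = 0}"

text \<open>The (cone over the) intersection of the hyperplanes with indices in S.\<close>
definition pint :: "nat \<Rightarrow> (nat \<Rightarrow> nat \<Rightarrow> complex) \<Rightarrow> (nat \<Rightarrow> complex) \<Rightarrow> nat set \<Rightarrow> (nat \<Rightarrow> complex) set" where
  "pint k b x S = {v \<in> hspace k. \<forall>m\<in>S. pform k b x m v = 0}"

definition containing :: "nat \<Rightarrow> nat \<Rightarrow> (nat \<Rightarrow> nat \<Rightarrow> complex) \<Rightarrow> (nat \<Rightarrow> complex) \<Rightarrow> (nat \<Rightarrow> complex) set \<Rightarrow> nat set" where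
  "containing k n b x V = {m \<in> {0..n}. \<forall>v\<in>V. pform k b x m v = 0}"

definition pweight :: "nat \<Rightarrow> (nat \<Rightarrow> complex) \<Rightarrow> nat \<Rightarrow> complex" where
  "pweight n a m = (if m = 0 then - (\<Sum>j=1..n. a j) else a m)"

text \<open>Reducibility of the sub-arrangement with index set T: after a linear change of the
  homogeneous coordinates (invertible matrix M, new forms = old forms composed with M) it splits
  into two nonempty groups T1, T2 whose forms involve disjoint sets P1, P2 of coordinates.\<close>
definition reducible :: "nat \<Rightarrow> (nat \<Rightarrow> nat \<Rightarrow> complex) \<Rightarrow> (nat \<Rightarrow> complex) \<Rightarrow> nat set \<Rightarrow> bool" where
  "reducible k b x T \<longleftrightarrow>
    (\<exists>T1 T2 P1 P2 (M :: nat \<Rightarrow> nat \<Rightarrow> complex) (N :: nat \<Rightarrow> nat \<Rightarrow> complex).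
       T1 \<noteq> {} \<and> T2 \<noteq> {} \<and> T1 \<union> T2 = T \<and> T1 \<inter> T2 = {} \<and>
       P1 \<inter> P2 = {} \<and>
       (\<forall>p\<in>{0..k}. \<forall>q\<in>{0..k}. (\<Sum>s=0..k. M p s * N s q) = (if p = q then 1 else 0)) \<and>
       (\<forall>m\<in>T1. \<forall>q\<in>{0..k} - P1. (\<Sum>s=0..k. pcoef b x m s * M s q) = 0) \<and>
       (\<forall>m\<in>T2. \<forall>q\<in>{0..k} - P2. (\<Sum>s=0..k. pcoef b x m s * M s q) = 0))"

text \<open>Unbalanced: every dense edge of the projective arrangement has nonzero weight. An edge is
  a nonempty (in P^k, i.e. nonzero cone) intersection of at least one hyperplane; it is dense if
  the arrangement of the hyperplanes containing it is irreducible.\<close>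
definition unbalanced :: "nat \<Rightarrow> nat \<Rightarrow> (nat \<Rightarrow> nat \<Rightarrow> complex) \<Rightarrow> (nat \<Rightarrow> complex) \<Rightarrow> (nat \<Rightarrow> complex) \<Rightarrow> bool" where
  "unbalanced k n b x a \<longleftrightarrow>
    (\<forall>S. S \<subseteq> {0..n} \<longrightarrow> S \<noteq> {} \<longrightarrow> (\<exists>v\<in>pint k b x S. v \<noteq> (\<lambda>_. 0)) \<longrightarrow>
       \<not> reducible k b x (containing k n b x (pint k b x S)) \<longrightarrow>
       (\<Sum>m\<in>containing k n b x (pint k b x S). pweight n a m) \<noteq> 0)"

end

theory Submission
  imports Defs "Jordan_Normal_Form.Determinant"
begin

text \<open>Write u_e = a_e/f_e, so that w_J = d_J prod_{e in J} u_e. For a list S of k+1 indices,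
  expanding the determinant D_S(x) with rows x, b^1, ..., b^k along its first row gives
  sum_p (-1)^p f_{S_p}(t) d_{S - S_p} = D_S(x) for every t; this turns L_C(w_J) into
  (-1)^k D_{J,c}(x) prod_{e in J+c} u_e, where c is the element of C missing from J.

  If j is not in J, only circuits inside J + j contribute to K_j(w_J). When d_J is nonzero there is
  exactly one, the support of the Cramer relation of J + j, and for it lambda^C_j D_{J,j}(x) equals
  (-1)^k d_J f_C(x); so K_j(w_J) = u_j w_J holds already as functions on U. When d_J = 0 both sides
  vanish: D_{J,j}(x) = 0 for every contributing circuit C, since f_C(x) \<noteq> 0.

  If j = J_q, replacing J_q by l and summing over l gives combinations of the generators
  dPhi/dt_i on both sides (Laplace expansion along column q), while the terms with l \<noteq> j agree
  by the first case; so the remaining term l = j lies in the ideal.\<close>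

definition remove_nth :: "nat \<Rightarrow> 'a list \<Rightarrow> 'a list" where
  "remove_nth q L = take q L @ drop (Suc q) L"

lemma length_remove_nth [simp]: "q < length L \<Longrightarrow> length (remove_nth q L) = length L - 1"
  by (simp add: remove_nth_def)

lemma nth_remove_nth:
  "q < length L \<Longrightarrow> c < length L - 1 \<Longrightarrow> remove_nth q L ! c = (if c < q then L ! c else L ! Suc c)"
  by (auto simp: remove_nth_def nth_append min_def)

lemma remove_nth_append: "q < length L \<Longrightarrow> remove_nth q (L @ M) = remove_nth q L @ M"
  by (simp add: remove_nth_def)

lemma remove_nth_length_append: "remove_nth (length L) (L @ [e]) = L"
  by (simp add: remove_nth_def)

lemma set_remove_nth:
  assumes "distinct L" "q < length L"
  shows "set (remove_nth q L) = set L - {L ! q}"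
proof -
  have "distinct (take q L @ L ! q # drop (Suc q) L)"
    using assms by (simp flip: id_take_nth_drop)
  moreover have "set L = set (take q L @ L ! q # drop (Suc q) L)"
    using id_take_nth_drop[OF assms(2)] by simp
  ultimately show ?thesis unfolding remove_nth_def by auto
qed

lemma distinct_remove_nth: "distinct L \<Longrightarrow> distinct (remove_nth q L)"
  unfolding remove_nth_def
  using set_take_disj_set_drop_if_distinct[of L q "Suc q"] by simp

lemma set_conv_nth_image: "set L = (!) L ` {..<length L}"
  by (auto simp: in_set_conv_nth)

lemma inj_on_nth_distinct: "distinct L \<Longrightarrow> inj_on ((!) L) {..<length L}"
  by (auto simp: inj_on_def nth_eq_iff_index_eq)

lemma sum_nth_distinct: "distinct L \<Longrightarrow> (\<Sum>p<length L. g (L ! p)) = sum g (set L)"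
  by (simp add: set_conv_nth_image sum.reindex[OF inj_on_nth_distinct])

lemma prod_nth_distinct: "distinct L \<Longrightarrow> (\<Prod>p<length L. g (L ! p)) = prod g (set L)"
  by (simp add: set_conv_nth_image prod.reindex[OF inj_on_nth_distinct])

lemma power_neg_one_square: "((-1 :: 'a :: comm_ring_1) ^ N) * (-1) ^ N = 1"
  by (simp flip: power_mult_distrib)

lemma power_neg_one_diff:
  assumes "m \<le> k"
  shows "(-1 :: 'a :: comm_ring_1) ^ k * (-1) ^ (k - m) = (-1) ^ m"
proof -
  have "(-1 :: 'a) ^ k = (-1) ^ m * (-1) ^ (k - m)" using assms by (simp flip: power_add)
  then show ?thesis using power_neg_one_square[of "k - m"] by (simp add: mult.assoc)
qed

lemma sign_cancel_divide:
  fixes l f s X d P :: "'a :: field"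
  assumes "f \<noteq> 0" "s * s = 1" "l * X = s * d * f"
  shows "l / f * (s * X * P) = d * P"
proof -
  have "l / f * (s * X * P) = (l * X) * (s * P) * inverse f" by (simp add: divide_inverse ac_simps)
  also have "\<dots> = (s * s) * d * P * (f * inverse f)" unfolding assms(3) by (simp add: ac_simps)
  also have "\<dots> = d * P" using assms(1,2) by simp
  finally show ?thesis .
qed

section \<open>Determinants with prescribed columns\<close>

definition col_matrix :: "nat \<Rightarrow> (nat \<Rightarrow> 'b \<Rightarrow> 'a :: comm_ring_1) \<Rightarrow> 'b list \<Rightarrow> 'a mat" where
  "col_matrix m A L = mat m m (\<lambda>(i, c). A i (L ! c))"

definition col_det :: "nat \<Rightarrow> (nat \<Rightarrow> 'b \<Rightarrow> 'a :: comm_ring_1) \<Rightarrow> 'b list \<Rightarrow> 'a" where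
  "col_det m A L = det (col_matrix m A L)"

lemma col_matrix_carrier [simp]: "col_matrix m A L \<in> carrier_mat m m"
  by (simp add: col_matrix_def)

lemma dcoef_eq_col_det: "dcoef k b js = col_det k (\<lambda>i. b (Suc i)) js"
  unfolding dcoef_def col_det_def col_matrix_def
  by (subst det_def'[of _ k]) (auto simp: atLeast0LessThan intro!: sum.cong prod.cong)

lemma col_det_swap:
  assumes "length L = m" "p < m" "q < m" "p \<noteq> q"
  shows "col_det m A (L[p := L ! q, q := L ! p]) = - col_det m A L"
proof -
  have "col_matrix m A (L[p := L ! q, q := L ! p]) = swapcols p q (col_matrix m A L)"
    using assms by (intro eq_matI) (auto simp: col_matrix_def mat_swapcols_def nth_list_update)
  then show ?thesis
    unfolding col_det_def using det_swapcols[OF assms(2-4) col_matrix_carrier] by simp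
qed

lemma col_det_swap_adjacent:
  assumes "length X + 2 + length Y = m"
  shows "col_det m A (X @ u # v # Y) = - col_det m A (X @ v # u # Y)"
proof -
  let ?L = "X @ v # u # Y"
  have "?L[length X := ?L ! Suc (length X), Suc (length X) := ?L ! length X] = X @ u # v # Y"
    by (simp add: list_update_append nth_append)
  then show ?thesis
    using col_det_swap[of ?L m "length X" "Suc (length X)" A] assms by simp
qed

lemma col_det_not_distinct:
  assumes "length L = m" "\<not> distinct L"
  shows "col_det m A L = 0"
proof -
  obtain i j where ij: "i < m" "j < m" "i \<noteq> j" "L ! i = L ! j"
    using assms by (auto simp: distinct_conv_nth)
  show ?thesis unfolding col_det_def
    by (rule det_identical_columns[OF col_matrix_carrier ij(3) ij(1) ij(2)])
       (use ij in \<open>auto simp: col_matrix_def intro!: eq_vecI\<close>)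
qed

lemma col_det_identical_rows:
  assumes "i \<noteq> j" "i < m" "j < m" "\<And>c. A i c = A j c"
  shows "col_det m A L = 0"
  unfolding col_det_def
  by (rule det_identical_rows[OF col_matrix_carrier assms(1-3)])
     (use assms in \<open>auto simp: col_matrix_def intro!: eq_vecI\<close>)

lemma col_det_eq_0_iff:
  fixes A :: "nat \<Rightarrow> 'b \<Rightarrow> 'a :: idom"
  shows "col_det m A L = 0 \<longleftrightarrow>
    (\<exists>w. (\<exists>p<m. w p \<noteq> 0) \<and> (\<forall>i<m. (\<Sum>p<m. A i (L ! p) * w p) = 0))"
proof -
  have kernel: "(col_matrix m A L *\<^sub>v v = 0\<^sub>v m) \<longleftrightarrow> (\<forall>i<m. (\<Sum>p<m. A i (L ! p) * v $ p) = 0)"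
    if "v \<in> carrier_vec m" for v
    using that by (auto simp: vec_eq_iff col_matrix_def mult_mat_vec_def scalar_prod_def row_def
        atLeast0LessThan)
  have nonzero: "v \<noteq> 0\<^sub>v m \<longleftrightarrow> (\<exists>p<m. v $ p \<noteq> 0)" if "v \<in> carrier_vec m" for v :: "'a vec"
    using that by (auto simp: vec_eq_iff)
  show ?thesis
    unfolding col_det_def det_0_iff_vec_prod_zero[OF col_matrix_carrier]
  proof
    assume "\<exists>v. v \<in> carrier_vec m \<and> v \<noteq> 0\<^sub>v m \<and> col_matrix m A L *\<^sub>v v = 0\<^sub>v m"
    then show "\<exists>w. (\<exists>p<m. w p \<noteq> 0) \<and> (\<forall>i<m. (\<Sum>p<m. A i (L ! p) * w p) = 0)"
      using kernel nonzero by (metis (no_types))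
  next
    assume "\<exists>w. (\<exists>p<m. w p \<noteq> 0) \<and> (\<forall>i<m. (\<Sum>p<m. A i (L ! p) * w p) = 0)"
    then obtain w where "\<exists>p<m. w p \<noteq> 0" "\<forall>i<m. (\<Sum>p<m. A i (L ! p) * w p) = 0" by blast
    then show "\<exists>v. v \<in> carrier_vec m \<and> v \<noteq> 0\<^sub>v m \<and> col_matrix m A L *\<^sub>v v = 0\<^sub>v m"
      using kernel[of "vec m w"] by (intro exI[of _ "vec m w"]) (auto simp: vec_eq_iff)
  qed
qed

lemma cofactor_col_matrix_first_row:
  assumes "length L = Suc m" "q < Suc m"
  shows "cofactor (col_matrix (Suc m) A L) 0 q = (-1) ^ q * col_det m (\<lambda>i. A (Suc i)) (remove_nth q L)"
proof -
  have "mat_delete (col_matrix (Suc m) A L) 0 q = col_matrix m (\<lambda>i. A (Suc i)) (remove_nth q L)"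
    using assms by (intro eq_matI) (auto simp: col_matrix_def mat_delete_def nth_remove_nth)
  then show ?thesis by (simp add: cofactor_def col_det_def)
qed

lemma col_det_expand_first_row:
  assumes "length L = Suc m"
  shows "col_det (Suc m) A L =
    (\<Sum>p<Suc m. (-1) ^ p * A 0 (L ! p) * col_det m (\<lambda>i. A (Suc i)) (remove_nth p L))"
proof -
  have "col_det (Suc m) A L =
      (\<Sum>p<Suc m. col_matrix (Suc m) A L $$ (0, p) * cofactor (col_matrix (Suc m) A L) 0 p)"
    unfolding col_det_def by (rule laplace_expansion_row[OF col_matrix_carrier]) simp
  also have "\<dots> = (\<Sum>p<Suc m. (-1) ^ p * A 0 (L ! p) * col_det m (\<lambda>i. A (Suc i)) (remove_nth p L))"
  proof (intro sum.cong refl)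
    fix p assume "p \<in> {..<Suc m}"
    with cofactor_col_matrix_first_row[OF assms, of p A]
    show "col_matrix (Suc m) A L $$ (0, p) * cofactor (col_matrix (Suc m) A L) 0 p
        = (-1) ^ p * A 0 (L ! p) * col_det m (\<lambda>i. A (Suc i)) (remove_nth p L)"
      by (simp add: col_matrix_def)
  qed
  finally show ?thesis .
qed

lemma col_det_list_update:
  assumes "length L = m" "q < m"
  shows "col_det m A (L[q := l]) = (\<Sum>i<m. A i l * cofactor (col_matrix m A L) i q)"
proof -
  have "mat_delete (col_matrix m A (L[q := l])) i q = mat_delete (col_matrix m A L) i q" for i
    using assms by (intro eq_matI) (auto simp: col_matrix_def mat_delete_def nth_list_update)
  then show ?thesis
    unfolding col_det_def laplace_expansion_column[OF col_matrix_carrier assms(2)]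
    using assms by (intro sum.cong) (auto simp: cofactor_def col_matrix_def)
qed

lemma col_det_move_left:
  assumes "i \<le> length M" "length (M @ [c] @ Z) = m"
  shows "col_det m A (M @ [c] @ Z) = (-1) ^ (length M - i) * col_det m A (take i M @ [c] @ drop i M @ Z)"
  using assms
proof (induction "length M - i" arbitrary: i)
  case 0
  then show ?case by simp
next
  case (Suc d)
  then have i: "i < length M" by simp
  have "col_det m A (M @ [c] @ Z)
      = (-1) ^ (length M - Suc i) * col_det m A (take i M @ M ! i # c # drop (Suc i) M @ Z)"
    using Suc.hyps(1)[of "Suc i"] Suc.hyps(2) Suc.prems(2) i by (simp add: take_Suc_conv_app_nth)
  also have "\<dots> = (-1) ^ Suc (length M - Suc i) * col_det m A (take i M @ c # M ! i # drop (Suc i) M @ Z)"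
    using col_det_swap_adjacent[of "take i M" "drop (Suc i) M @ Z" m A "M ! i" c] Suc.prems(2) i
    by simp
  also have "Suc (length M - Suc i) = length M - i" using i by simp
  also have "take i M @ c # M ! i # drop (Suc i) M @ Z = take i M @ [c] @ drop i M @ Z"
    using i by (simp add: Cons_nth_drop_Suc)
  finally show ?case .
qed

definition position :: "'a list \<Rightarrow> 'a \<Rightarrow> nat" where
  "position M e = (THE i. i < length M \<and> M ! i = e)"

lemma position_nth: "distinct M \<Longrightarrow> i < length M \<Longrightarrow> position M (M ! i) = i"
  unfolding position_def by (rule the_equality) (auto simp: nth_eq_iff_index_eq)

lemma position_in_set: "distinct M \<Longrightarrow> e \<in> set M \<Longrightarrow> position M e < length M \<and> M ! position M e = e"
  by (metis in_set_conv_nth position_nth)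

definition inversions :: "'a list \<Rightarrow> 'a list \<Rightarrow> (nat \<times> nat) set" where
  "inversions L M = {(p, q). p < q \<and> q < length L \<and>
     (\<exists>p' q'. q' < p' \<and> p' < length M \<and> M ! p' = L ! p \<and> M ! q' = L ! q)}"

lemma rearr_sign_eq: "rearr_sign L M = (-1) ^ card (inversions L M)"
  unfolding rearr_sign_def inversions_def by simp

lemma inversions_conv_position:
  assumes M: "distinct M" and L: "set L \<subseteq> set M"
  shows "inversions L M =
    {(p, q). p < q \<and> q < length L \<and> position M (L ! q) < position M (L ! p)}"
proof -
  have "(\<exists>p' q'. q' < p' \<and> p' < length M \<and> M ! p' = L ! p \<and> M ! q' = L ! q)
      \<longleftrightarrow> position M (L ! q) < position M (L ! p)" if "p < q" "q < length L" for p q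
  proof
    assume "\<exists>p' q'. q' < p' \<and> p' < length M \<and> M ! p' = L ! p \<and> M ! q' = L ! q"
    then obtain p' q' where "q' < p'" "p' < length M" "M ! p' = L ! p" "M ! q' = L ! q" by blast
    then show "position M (L ! q) < position M (L ! p)"
      using position_nth[OF M, of p'] position_nth[OF M, of q'] by simp
  next
    have "L ! p \<in> set M" "L ! q \<in> set M" using that L nth_mem by (auto simp: subset_iff)
    then show "\<exists>p' q'. q' < p' \<and> p' < length M \<and> M ! p' = L ! p \<and> M ! q' = L ! q"
      if "position M (L ! q) < position M (L ! p)"
      using that position_in_set[OF M] by blast
  qed
  then show ?thesis unfolding inversions_def by (simp cong: conj_cong)
qed

lemma eq_if_no_adjacent_inversion:
  assumes L: "distinct L" and M: "distinct M" and LM: "set L = set M"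
    and no_adj: "\<And>p. Suc p < length L \<Longrightarrow> (p, Suc p) \<notin> inversions L M"
  shows "L = M"
proof -
  have len: "length L = length M"
    using distinct_card[OF L] distinct_card[OF M] LM by simp
  have "sorted (map (position M) L)"
    using no_adj unfolding sorted_iff_nth_Suc inversions_conv_position[OF M equalityD1[OF LM]]
    by (simp add: not_less)
  moreover have "inj_on (position M) (set L)"
    using LM position_in_set[OF M] by (metis inj_onI)
  then have "distinct (map (position M) L)"
    using L by (simp add: distinct_map)
  moreover have "set (map (position M) L) = {..<length M}"
  proof -
    have "position M ` set M = (\<lambda>i. position M (M ! i)) ` {..<length M}"
      by (simp add: set_conv_nth_image[of M] image_image)
    also have "\<dots> = (\<lambda>i. i) ` {..<length M}"
      by (rule image_cong) (simp_all add: position_nth[OF M])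
    finally show ?thesis using LM by simp
  qed
  ultimately have "map (position M) L = [0..<length M]"
    by (intro sorted_distinct_set_unique) (auto simp: lessThan_atLeast0)
  then have pos: "position M (L ! i) = i" if "i < length L" for i
    using that len nth_map[of i L "position M"] by simp
  show ?thesis
  proof (rule nth_equalityI[OF len])
    fix i assume i: "i < length L"
    then have "L ! i \<in> set M" using LM nth_mem by blast
    then show "L ! i = M ! i" using position_in_set[OF M] pos[OF i] by metis
  qed
qed

lemma card_pairs_transpose_adjacent:
  fixes P :: "nat \<Rightarrow> nat \<Rightarrow> bool"
  assumes pn: "Suc p < n" and P: "P p (Suc p)" "\<not> P (Suc p) p"
  defines "\<tau> \<equiv> Transposition.transpose p (Suc p)"
  shows "card {(i, j). i < j \<and> j < n \<and> P (\<tau> i) (\<tau> j)} = card {(i, j). i < j \<and> j < n \<and> P i j} - 1"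
proof -
  let ?S = "{(i, j). i < j \<and> j < n \<and> P i j}"
  let ?f = "\<lambda>(i, j). (\<tau> i, \<tau> j)"
  have mono: "\<tau> i < \<tau> j" if "i < j" "(i, j) \<noteq> (p, Suc p)" for i j
    using that by (auto simp: \<tau>_def transpose_def)
  have bound: "\<tau> j < n" if "j < n" for j
    using that pn by (auto simp: \<tau>_def transpose_def)
  have "{(i, j). i < j \<and> j < n \<and> P (\<tau> i) (\<tau> j)} = ?f ` (?S - {(p, Suc p)})"
  proof (intro equalityI subsetI)
    fix z assume "z \<in> {(i, j). i < j \<and> j < n \<and> P (\<tau> i) (\<tau> j)}"
    then obtain i j where ij: "z = (i, j)" "i < j" "j < n" "P (\<tau> i) (\<tau> j)" by blast
    have "(i, j) \<noteq> (p, Suc p)" using ij(4) P(2) by (auto simp: \<tau>_def)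
    moreover have "(\<tau> i, \<tau> j) \<noteq> (p, Suc p)" using ij(2) by (auto simp: \<tau>_def transpose_eq_iff)
    ultimately have "(\<tau> i, \<tau> j) \<in> ?S - {(p, Suc p)}" using ij mono bound by auto
    moreover have "z = ?f (\<tau> i, \<tau> j)" using ij(1) by (simp add: \<tau>_def)
    ultimately show "z \<in> ?f ` (?S - {(p, Suc p)})" by blast
  next
    fix z assume "z \<in> ?f ` (?S - {(p, Suc p)})"
    then obtain i j where "(i, j) \<in> ?S - {(p, Suc p)}" "z = (\<tau> i, \<tau> j)" by auto
    then show "z \<in> {(i, j). i < j \<and> j < n \<and> P (\<tau> i) (\<tau> j)}"
      using mono bound by (simp add: \<tau>_def)
  qed
  moreover have "inj_on ?f (?S - {(p, Suc p)})"
    by (auto simp: inj_on_def \<tau>_def transpose_eq_iff)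
  moreover have "(p, Suc p) \<in> ?S" using pn P by auto
  ultimately show ?thesis by (simp add: card_image card_Diff_singleton)
qed

lemma card_inversions_swap_adjacent:
  assumes M: "distinct M" "set L \<subseteq> set M" and p: "(p, Suc p) \<in> inversions L M"
  shows "card (inversions (L[p := L ! Suc p, Suc p := L ! p]) M) = card (inversions L M) - 1"
proof -
  let ?\<tau> = "Transposition.transpose p (Suc p)"
  let ?L = "L[p := L ! Suc p, Suc p := L ! p]"
  have pn: "Suc p < length L" using p by (simp add: inversions_def)
  have nth: "?L ! i = L ! ?\<tau> i" if "i < length L" for i
    using that pn by (auto simp: nth_list_update transpose_def)
  have L_sub: "set ?L \<subseteq> set M"
    using M(2) pn by (auto dest!: subsetD[OF set_update_subset_insert] simp: subset_iff)
  have "inversions ?L M = {(i, j). i < j \<and> j < length L \<and>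
      position M (L ! ?\<tau> j) < position M (L ! ?\<tau> i)}"
    unfolding inversions_conv_position[OF M(1) L_sub] by (auto simp: nth)
  also have "card \<dots> = card (inversions L M) - 1"
    unfolding inversions_conv_position[OF M]
    using p pn position_in_set[OF M(1)] M(2)
    by (intro card_pairs_transpose_adjacent[where P = "\<lambda>i j. position M (L ! j) < position M (L ! i)"])
       (auto simp: inversions_conv_position[OF M])
  finally show ?thesis .
qed

lemma finite_inversions: "finite (inversions L M)"
  by (rule finite_subset[of _ "{..<length L} \<times> {..<length L}"]) (auto simp: inversions_def)

lemma inversions_self: "distinct M \<Longrightarrow> inversions M M = {}"
  by (simp add: inversions_conv_position position_nth)

lemma col_det_rearrange:
  assumes "distinct L" "distinct M" "set L = set M" "length (L @ Z) = m"
  shows "col_det m A (L @ Z) = rearr_sign L M * col_det m A (M @ Z)"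
  using assms
proof (induction "card (inversions L M)" arbitrary: L)
  case 0
  have "L = M"
    using 0 finite_inversions[of L M] by (intro eq_if_no_adjacent_inversion) auto
  then show ?case by (simp add: rearr_sign_eq inversions_self[OF \<open>distinct M\<close>])
next
  case (Suc N)
  obtain p where p: "(p, Suc p) \<in> inversions L M"
    using eq_if_no_adjacent_inversion[OF Suc.prems(1-3)] inversions_self[OF Suc.prems(2)] Suc.hyps(2)
    by fastforce
  then have pL: "Suc p < length L" by (simp add: inversions_def)
  define L' where "L' = L[p := L ! Suc p, Suc p := L ! p]"
  have card: "card (inversions L' M) = N"
    using card_inversions_swap_adjacent[OF Suc.prems(2) _ p] Suc.hyps(2) Suc.prems(3)
    by (simp add: L'_def)
  have IH: "col_det m A (L' @ Z) = rearr_sign L' M * col_det m A (M @ Z)"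
    using Suc.hyps(1)[OF card[symmetric]] Suc.prems pL by (simp add: L'_def)
  have "(L @ Z)[p := (L @ Z) ! Suc p, Suc p := (L @ Z) ! p] = L' @ Z"
    using pL by (simp add: L'_def list_update_append nth_append)
  then have "col_det m A (L @ Z) = - col_det m A (L' @ Z)"
    using col_det_swap[of "L @ Z" m p "Suc p" A] Suc.prems(4) pL by simp
  moreover have "rearr_sign L M = - rearr_sign L' M"
    using card Suc.hyps(2) by (simp add: rearr_sign_eq flip: Suc.hyps(2))
  ultimately show ?case using IH by simp
qed

lemma col_det_eq_0_iff_relation:
  fixes A :: "nat \<Rightarrow> 'b \<Rightarrow> 'a :: idom"
  assumes L: "distinct L" "length L = m"
  shows "col_det m A L = 0 \<longleftrightarrow>
    (\<exists>\<nu>. (\<exists>e\<in>set L. \<nu> e \<noteq> 0) \<and> (\<forall>i<m. (\<Sum>e\<in>set L. A i e * \<nu> e) = 0))"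
proof -
  have sum_eq: "(\<Sum>e\<in>set L. A i e * \<nu> e) = (\<Sum>p<m. A i (L ! p) * \<nu> (L ! p))" for i \<nu>
    using sum_nth_distinct[OF L(1), of "\<lambda>e. A i e * \<nu> e"] L(2) by simp
  show ?thesis
    unfolding col_det_eq_0_iff sum_eq
  proof safe
    fix w p assume "\<forall>i<m. (\<Sum>p<m. A i (L ! p) * w p) = 0" "p < m" "w p \<noteq> 0"
    then show "\<exists>\<nu>. (\<exists>e\<in>set L. \<nu> e \<noteq> 0) \<and> (\<forall>i<m. (\<Sum>p<m. A i (L ! p) * \<nu> (L ! p)) = 0)"
      using L position_nth[OF L(1)]
      by (intro exI[of _ "\<lambda>e. w (position L e)"]) (auto intro!: bexI[of _ "L ! p"])
  next
    fix \<nu> e assume "\<forall>i<m. (\<Sum>p<m. A i (L ! p) * \<nu> (L ! p)) = 0" "e \<in> set L" "\<nu> e \<noteq> 0"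
    then show "\<exists>w. (\<exists>p<m. w p \<noteq> 0) \<and> (\<forall>i<m. (\<Sum>p<m. A i (L ! p) * w p) = 0)"
      using L by (intro exI[of _ "\<lambda>p. \<nu> (L ! p)"]) (auto simp: in_set_conv_nth)
  qed
qed

section \<open>Linear relations among the g_j\<close>

definition linear_relation :: "nat \<Rightarrow> (nat \<Rightarrow> nat \<Rightarrow> complex) \<Rightarrow> nat set \<Rightarrow> (nat \<Rightarrow> complex) \<Rightarrow> bool" where
  "linear_relation k b S \<nu> \<longleftrightarrow> (\<forall>i\<in>{1..k}. (\<Sum>e\<in>S. \<nu> e * b i e) = 0)"

lemma indep_set_iff: "indep_set k b S \<longleftrightarrow> (\<forall>\<nu>. linear_relation k b S \<nu> \<longrightarrow> (\<forall>e\<in>S. \<nu> e = 0))"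
  by (simp add: indep_set_def linear_relation_def)

lemma linear_relation_mono_neutral:
  assumes "finite T" "S \<subseteq> T" "\<And>e. e \<in> T - S \<Longrightarrow> \<nu> e = 0"
  shows "linear_relation k b T \<nu> \<longleftrightarrow> linear_relation k b S \<nu>"
  unfolding linear_relation_def using assms by (simp add: sum.mono_neutral_right[of T S])

lemma linear_relation_lincomb:
  "linear_relation k b S \<mu> \<Longrightarrow> linear_relation k b S \<nu> \<Longrightarrow>
    linear_relation k b S (\<lambda>e. c * \<mu> e + d * \<nu> e)"
  by (simp add: linear_relation_def algebra_simps sum.distrib flip: sum_distrib_left)

lemma indep_set_subset:
  assumes "indep_set k b S" "T \<subseteq> S" "finite S"
  shows "indep_set k b T"
  unfolding indep_set_iff
proof (intro allI impI ballI)
  fix \<nu> e assume rel: "linear_relation k b T \<nu>" and e: "e \<in> T"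
  let ?\<nu> = "\<lambda>e. if e \<in> T then \<nu> e else 0"
  have "linear_relation k b T ?\<nu>"
    using rel by (simp add: linear_relation_def)
  then have "linear_relation k b S ?\<nu>"
    using assms(2,3) by (subst linear_relation_mono_neutral) auto
  then show "\<nu> e = 0" using assms(1) e assms(2) unfolding indep_set_iff by force
qed

lemma ball_atLeastAtMost_1_iff: "(\<forall>i\<in>{1..k}. P i) \<longleftrightarrow> (\<forall>i<k. P (Suc i))"
proof -
  have "{1..k} = Suc ` {..<k}" by (simp add: image_Suc_lessThan)
  then show ?thesis by auto
qed

lemma dcoef_eq_0_iff_dependent:
  assumes "distinct L" "length L = k"
  shows "dcoef k b L = 0 \<longleftrightarrow> \<not> indep_set k b (set L)"
  unfolding dcoef_eq_col_det col_det_eq_0_iff_relation[OF assms] indep_set_iff linear_relation_def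
    ball_atLeastAtMost_1_iff
  by (auto simp: mult.commute)

lemma dcoef_eq_0_if_dependent:
  assumes "distinct L" "length L = k" "C \<subseteq> set L" "\<not> indep_set k b C"
  shows "dcoef k b L = 0"
  using assms(3,4) indep_set_subset[of k b "set L" C] dcoef_eq_0_iff_dependent[OF assms(1,2)]
  by auto

text \<open>D_S(x): the (k+1)-minor with columns S of the matrix with rows x, b^1, ..., b^k. For a
  circuit C contained in S it is proportional to f_C(x), which is how the discriminant enters.\<close>

definition xdet :: "nat \<Rightarrow> (nat \<Rightarrow> nat \<Rightarrow> complex) \<Rightarrow> (nat \<Rightarrow> complex) \<Rightarrow> nat list \<Rightarrow> complex" where
  "xdet k b x S = col_det (Suc k) (\<lambda>i e. if i = 0 then x e else b i e) S"

lemma dcoef_expansion_b_row: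
  assumes "length S = Suc k" "i \<in> {1..k}"
  shows "(\<Sum>p<Suc k. (-1) ^ p * b i (S ! p) * dcoef k b (remove_nth p S)) = 0"
proof -
  let ?A = "\<lambda>r e. if r = 0 then b i e else b r e"
  have "col_det (Suc k) ?A S = 0"
    by (rule col_det_identical_rows[of 0 i]) (use assms in auto)
  then show ?thesis
    using col_det_expand_first_row[OF assms(1), of ?A] by (simp add: dcoef_eq_col_det)
qed

lemma dcoef_expansion_x_row:
  assumes "length S = Suc k"
  shows "(\<Sum>p<Suc k. (-1) ^ p * x (S ! p) * dcoef k b (remove_nth p S)) = xdet k b x S"
  using col_det_expand_first_row[OF assms, of "\<lambda>r e. if r = 0 then x e else b r e"]
  by (simp add: xdet_def dcoef_eq_col_det)

lemma dcoef_expansion_ffun: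
  assumes "length S = Suc k"
  shows "(\<Sum>p<Suc k. (-1) ^ p * ffun k b x (S ! p) t * dcoef k b (remove_nth p S)) = xdet k b x S"
proof -
  have "(\<Sum>p<Suc k. (-1) ^ p * ffun k b x (S ! p) t * dcoef k b (remove_nth p S))
      = (\<Sum>p<Suc k. (-1) ^ p * x (S ! p) * dcoef k b (remove_nth p S)) +
        (\<Sum>i=1..k. t i * (\<Sum>p<Suc k. (-1) ^ p * b i (S ! p) * dcoef k b (remove_nth p S)))"
    unfolding ffun_def gfun_def sum_distrib_left
    by (subst sum.swap) (simp add: algebra_simps sum.distrib sum_distrib_left sum_distrib_right)
  then show ?thesis
    using dcoef_expansion_b_row[OF assms] dcoef_expansion_x_row[OF assms] by simp
qed

lemma xdet_eq_0_if_relation: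
  assumes S: "distinct S" "length S = Suc k"
    and z: "linear_relation k b (set S) z" "(\<Sum>e\<in>set S. z e * x e) = 0" "\<exists>e\<in>set S. z e \<noteq> 0"
  shows "xdet k b x S = 0"
proof -
  have "(\<Sum>e\<in>set S. (if i = 0 then x e else b i e) * z e) = 0" if "i < Suc k" for i
  proof (cases "i = 0")
    case True
    then show ?thesis using z(2) by (simp add: mult.commute)
  next
    case False
    then have "i \<in> {1..k}" using that by simp
    then show ?thesis using z(1) False by (simp add: linear_relation_def mult.commute)
  qed
  then show ?thesis
    unfolding xdet_def col_det_eq_0_iff_relation[OF S] using z(3) by blast
qed

definition cramer :: "nat \<Rightarrow> (nat \<Rightarrow> nat \<Rightarrow> complex) \<Rightarrow> nat list \<Rightarrow> nat \<Rightarrow> complex" where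
  "cramer k b S e =
    (if e \<in> set S then (-1) ^ position S e * dcoef k b (remove_nth (position S e) S) else 0)"

lemma sum_cramer:
  assumes "distinct S" "length S = Suc k"
  shows "(\<Sum>e\<in>set S. cramer k b S e * h e) =
    (\<Sum>p<Suc k. (-1) ^ p * h (S ! p) * dcoef k b (remove_nth p S))"
  unfolding sum_nth_distinct[OF assms(1), symmetric]
  using assms by (intro sum.cong) (auto simp: cramer_def position_nth)

lemma cramer_linear_relation:
  assumes "distinct S" "length S = Suc k"
  shows "linear_relation k b (set S) (cramer k b S)"
  unfolding linear_relation_def sum_cramer[OF assms] using dcoef_expansion_b_row[OF assms(2)] by blast

lemma sum_cramer_x:
  assumes "distinct S" "length S = Suc k"
  shows "(\<Sum>e\<in>set S. cramer k b S e * x e) = xdet k b x S"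
  unfolding sum_cramer[OF assms] by (rule dcoef_expansion_x_row[OF assms(2)])

lemma cramer_last:
  assumes "distinct (js @ [j])" "length js = k"
  shows "cramer k b (js @ [j]) j = (-1) ^ k * dcoef k b js"
proof -
  have "position (js @ [j]) j = k"
    using position_nth[OF assms(1), of k] assms(2) by (simp add: nth_append)
  then show ?thesis by (simp add: cramer_def remove_nth_length_append flip: assms(2))
qed

lemma linear_relation_proportional_cramer:
  assumes S: "distinct (js @ [j])" "length js = k" and d: "dcoef k b js \<noteq> 0"
    and rel: "linear_relation k b (set (js @ [j])) \<nu>" and e: "e \<in> set (js @ [j])"
  shows "\<nu> e * cramer k b (js @ [j]) j = \<nu> j * cramer k b (js @ [j]) e"
proof -
  let ?\<mu> = "cramer k b (js @ [j])"
  define \<nu>' where "\<nu>' e = ?\<mu> j * \<nu> e - \<nu> j * ?\<mu> e" for e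
  have "linear_relation k b (set (js @ [j])) \<nu>'"
    unfolding \<nu>'_def using linear_relation_lincomb[OF rel cramer_linear_relation[OF S(1)], of "?\<mu> j" "- \<nu> j"] S(2)
    by simp
  then have "linear_relation k b (set js) \<nu>'"
    by (subst (asm) linear_relation_mono_neutral) (auto simp: \<nu>'_def)
  moreover have "indep_set k b (set js)"
    using dcoef_eq_0_iff_dependent[of js k b] S d by simp
  ultimately have "\<nu>' e = 0"
    using e by (auto simp: indep_set_iff \<nu>'_def)
  then show ?thesis by (simp add: \<nu>'_def mult.commute)
qed

section \<open>Marked elements and the operators L_C\<close>

lemma finite_circuit: "circuit k n b C \<Longrightarrow> finite C"
  unfolding circuit_def using finite_subset by blast

lemma finite_circuits: "finite {C. circuit k n b C}"
  by (rule finite_subset[of _ "Pow {1..n}"]) (auto simp: circuit_def)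

lemma wfun_distinct:
  "distinct js \<Longrightarrow> wfun k b x a js t = dcoef k b js * (\<Prod>e\<in>set js. a e / ffun k b x e t)"
  by (simp add: wfun_def prod_nth_distinct[of js "\<lambda>e. a e / ffun k b x e t"])

lemma wfun_not_distinct: "length js = k \<Longrightarrow> \<not> distinct js \<Longrightarrow> wfun k b x a js t = 0"
  by (simp add: wfun_def dcoef_eq_col_det col_det_not_distinct)

lemma LC_not_distinct: "\<not> distinct js \<Longrightarrow> LC k b x a C js t = 0"
  by (simp add: LC_def Let_def)

lemma Kop_not_distinct: "\<not> distinct js \<Longrightarrow> Kop k n b x a lam j js t = 0"
  by (simp add: Kop_def LC_not_distinct)

lemma LC_nonzero_imp:
  assumes "finite C" "LC k b x a C js t \<noteq> 0"
  shows "distinct js \<and> (\<exists>c\<in>C. set js \<inter> C = C - {c})"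
proof -
  let ?cs = "sorted_list_of_set C"
  have "distinct js \<and> (\<exists>m<length ?cs. set js \<inter> C = C - {?cs ! m})"
  proof (rule ccontr)
    assume "\<not> ?thesis"
    then have "LC k b x a C js t = 0" unfolding LC_def Let_def by (simp only: if_False)
    then show False using assms(2) by simp
  qed
  then obtain m where "distinct js" "m < length ?cs" "set js \<inter> C = C - {?cs ! m}" by blast
  moreover have "?cs ! m \<in> C" using nth_mem[OF \<open>m < length ?cs\<close>] assms(1) by simp
  ultimately show ?thesis by blast
qed

lemma LC_unfold:
  assumes C: "finite C" and js: "distinct js" "set js \<inter> C = C - {c}" and c: "c \<in> C"
  defines "cs \<equiv> sorted_list_of_set C" and "ss \<equiv> filter (\<lambda>j. j \<notin> C) js"
  obtains m where "m < length cs" "cs ! m = c"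
    "LC k b x a C js t = rearr_sign js (remove_nth m cs @ ss) * (-1) ^ Suc m *
      (\<Sum>l<length cs. (-1) ^ Suc l * a (cs ! l) * wfun k b x a (remove_nth l cs @ ss) t)"
proof -
  have cs: "distinct cs" "set cs = C" using C by (simp_all add: cs_def)
  obtain m where m: "m < length cs" "cs ! m = c" using c cs(2) by (metis in_set_conv_nth)
  have cond: "distinct js \<and> (\<exists>m<length cs. set js \<inter> C = C - {cs ! m})"
    using js m by blast
  have the_m: "(THE m. m < length cs \<and> set js \<inter> C = C - {cs ! m}) = m"
  proof (rule the_equality)
    fix m' assume "m' < length cs \<and> set js \<inter> C = C - {cs ! m'}"
    then have "cs ! m' = c" using js(2) c cs(2) nth_mem by blast
    then show "m' = m" using nth_eq_iff_index_eq[OF cs(1)] m \<open>m' < length cs \<and> _\<close> by metis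
  qed (use m js in simp)
  have "LC k b x a C js t = rearr_sign js (remove_nth m cs @ ss) * (-1) ^ Suc m *
      (\<Sum>l<length cs. (-1) ^ Suc l * a (cs ! l) * wfun k b x a (remove_nth l cs @ ss) t)"
    unfolding LC_def Let_def cs_def[symmetric] ss_def[symmetric] remove_nth_def[symmetric]
    by (simp only: cond the_m if_True simp_thms)
  then show ?thesis using m that by blast
qed

lemma weight_mult_wfun_remove_nth:
  assumes T: "distinct T" "set T \<subseteq> {1..n}" "l < length T" and t: "t \<in> complU k n b x"
  shows "a (T ! l) * wfun k b x a (remove_nth l T) t
    = ffun k b x (T ! l) t * dcoef k b (remove_nth l T) * (\<Prod>e\<in>set T. a e / ffun k b x e t)"
proof -
  let ?u = "\<lambda>e. a e / ffun k b x e t" and ?f = "ffun k b x (T ! l) t"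
  let ?Q = "\<Prod>e\<in>set (remove_nth l T). ?u e"
  have "T ! l \<in> {1..n}" using T nth_mem by blast
  then have "?f \<noteq> 0" using t by (simp add: complU_def)
  then have a: "a (T ! l) = ?f * ?u (T ! l)" by simp
  have "(\<Prod>e\<in>set T. ?u e) = ?u (T ! l) * ?Q"
    unfolding set_remove_nth[OF T(1,3)] by (rule prod.remove) (use T in auto)
  moreover have "wfun k b x a (remove_nth l T) t = dcoef k b (remove_nth l T) * ?Q"
    using T by (simp add: wfun_distinct distinct_remove_nth)
  ultimately show ?thesis by (subst a) (simp only: ac_simps)
qed

text \<open>The minors omitting a column beyond the first r vanish because the first r columns are
  dependent, so the sum may stop at r.\<close>

lemma alternating_sum_wfun:
  assumes T: "distinct T" "length T = Suc k" "set T \<subseteq> {1..n}" and t: "t \<in> complU k n b x"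
    and r: "r \<le> Suc k" and dep: "\<not> indep_set k b (set (take r T))"
  shows "(\<Sum>l<r. (-1) ^ l * a (T ! l) * wfun k b x a (remove_nth l T) t)
    = xdet k b x T * (\<Prod>e\<in>set T. a e / ffun k b x e t)"
proof -
  let ?F = "\<lambda>p. (-1) ^ p * ffun k b x (T ! p) t * dcoef k b (remove_nth p T)"
  have "?F p = 0" if p: "p \<in> {r..<Suc k}" for p
  proof -
    have "set (take r T) \<subseteq> set (remove_nth p T)"
      using set_take_subset_set_take[of r p T] p by (auto simp: remove_nth_def)
    then have "dcoef k b (remove_nth p T) = 0"
      using p T dep by (intro dcoef_eq_0_if_dependent) (auto simp: distinct_remove_nth)
    then show ?thesis by simp
  qed
  then have "(\<Sum>p<r. ?F p) = (\<Sum>p<Suc k. ?F p)"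
    using r by (intro sum.mono_neutral_left) auto
  also have "\<dots> = xdet k b x T" by (rule dcoef_expansion_ffun[OF T(2)])
  finally have sum_F: "(\<Sum>p<r. ?F p) = xdet k b x T" .
  have "(\<Sum>l<r. (-1) ^ l * a (T ! l) * wfun k b x a (remove_nth l T) t)
      = (\<Sum>l<r. ?F l * (\<Prod>e\<in>set T. a e / ffun k b x e t))"
  proof (intro sum.cong refl)
    fix l assume "l \<in> {..<r}"
    then have "l < length T" using r T(2) by simp
    then show "(-1) ^ l * a (T ! l) * wfun k b x a (remove_nth l T) t
        = ?F l * (\<Prod>e\<in>set T. a e / ffun k b x e t)"
      using weight_mult_wfun_remove_nth[OF T(1,3) _ t] by (simp add: mult.assoc)
  qed
  then show ?thesis by (simp add: sum_F flip: sum_distrib_right)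
qed

lemma xdet_rearrange_insert:
  assumes "distinct L" "distinct M" "set L = set M" "length L = k" "m \<le> k"
  shows "xdet k b x (L @ [c]) = rearr_sign L M * (-1) ^ (k - m) * xdet k b x (take m M @ [c] @ drop m M)"
proof -
  have len: "length M = k" using assms distinct_card by metis
  have "xdet k b x (M @ [c] @ []) = (-1) ^ (length M - m) * xdet k b x (take m M @ [c] @ drop m M @ [])"
    unfolding xdet_def by (rule col_det_move_left) (use len assms(5) in auto)
  then show ?thesis
    using len col_det_rearrange[OF assms(1-3), of "[c]" "Suc k"] assms(4) by (simp add: xdet_def)
qed

lemma circuit_completion:
  assumes C: "finite C" "c \<in> C" and js: "distinct js" "c \<notin> set js" "set js \<inter> C = C - {c}"
  defines "cs \<equiv> sorted_list_of_set C" and "ss \<equiv> filter (\<lambda>j. j \<notin> C) js"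
  shows "distinct (cs @ ss)" "set (cs @ ss) = insert c (set js)" "length (cs @ ss) = Suc (length js)"
proof -
  have cs: "distinct cs" "set cs = C" using C by (simp_all add: cs_def)
  have ss: "distinct ss" "set ss = set js - C" using js by (auto simp: ss_def)
  show "distinct (cs @ ss)" using cs ss by auto
  show set_eq: "set (cs @ ss) = insert c (set js)" using cs ss C js by auto
  have "length (cs @ ss) = card (set (cs @ ss))"
    using distinct_card[OF \<open>distinct (cs @ ss)\<close>] by simp
  also have "\<dots> = Suc (length js)" using set_eq js by (simp add: distinct_card)
  finally show "length (cs @ ss) = Suc (length js)" .
qed

text \<open>Moving the missing element c of C to the end turns the alternating sum defining L_C into
  the expansion of D_{J,c}(x) along its first row.\<close>

lemma LC_eq_xdet:
  assumes C: "circuit k n b C" "c \<in> C"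
    and js: "distinct js" "length js = k" "set js \<subseteq> {1..n}" "c \<notin> set js" "set js \<inter> C = C - {c}"
    and t: "t \<in> complU k n b x"
  shows "LC k b x a C js t = (-1) ^ k * xdet k b x (js @ [c]) * (\<Prod>e\<in>insert c (set js). a e / ffun k b x e t)"
proof -
  define cs where "cs = sorted_list_of_set C"
  define ss where "ss = filter (\<lambda>j. j \<notin> C) js"
  let ?T = "cs @ ss" and ?P = "\<Prod>e\<in>insert c (set js). a e / ffun k b x e t"
  have finC: "finite C" and dep: "\<not> indep_set k b C" and Cn: "C \<subseteq> {1..n}"
    using C(1) finite_circuit by (auto simp: circuit_def)
  note T = circuit_completion[OF finC C(2) js(1,4,5), folded cs_def ss_def]
  have cs: "set cs = C" using finC by (simp add: cs_def)
  obtain m where m: "m < length cs" "cs ! m = c" and LC: "LC k b x a C js t =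
      rearr_sign js (remove_nth m cs @ ss) * (-1) ^ Suc m *
      (\<Sum>l<length cs. (-1) ^ Suc l * a (cs ! l) * wfun k b x a (remove_nth l cs @ ss) t)"
    using LC_unfold[OF finC js(1,5) C(2), of k b x a t] unfolding cs_def ss_def by blast
  define M where "M = remove_nth m cs @ ss"
  have "(\<Sum>l<length cs. (-1) ^ Suc l * a (cs ! l) * wfun k b x a (remove_nth l cs @ ss) t)
      = - (\<Sum>l<length cs. (-1) ^ l * a (?T ! l) * wfun k b x a (remove_nth l ?T) t)"
    by (simp add: sum_negf[symmetric] nth_append remove_nth_append)
  also have "\<dots> = - xdet k b x ?T * ?P"
    using T js(2,3) Cn C(2) t dep cs
    by (subst alternating_sum_wfun[where n = n]) (auto simp: T(2))
  finally have LC': "LC k b x a C js t = rearr_sign js M * (-1) ^ m * xdet k b x ?T * ?P"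
    unfolding LC M_def by simp
  have m_le: "m \<le> k" using m(1) T(3) js(2) by simp
  have M_T: "take m M @ [c] @ drop m M = ?T"
    using m id_take_nth_drop[OF m(1)] by (simp add: M_def remove_nth_def min_def)
  have "set (remove_nth m cs) = C - {c}"
    using set_remove_nth[of cs m] T(1) m cs by simp
  then have "distinct M" "set js = set M"
    using T(1,2) distinct_remove_nth[of cs m] cs C(2) js(4) by (auto simp: M_def)
  then have "xdet k b x (js @ [c]) = rearr_sign js M * (-1) ^ (k - m) * xdet k b x ?T"
    using xdet_rearrange_insert[OF js(1) _ _ js(2) m_le, of M b x c] M_T by simp
  then show ?thesis unfolding LC' using power_neg_one_diff[OF m_le, where 'a = complex] by (simp add: ac_simps)
qed

section \<open>Circuits inside J + j\<close>

lemma circuit_cramer_support: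
  assumes S: "distinct (js @ [j])" "length js = k" "set (js @ [j]) \<subseteq> {1..n}"
    and d: "dcoef k b js \<noteq> 0"
  defines "\<mu> \<equiv> cramer k b (js @ [j])"
  shows "circuit k n b {e \<in> set (js @ [j]). \<mu> e \<noteq> 0}" and "j \<in> {e \<in> set (js @ [j]). \<mu> e \<noteq> 0}"
proof -
  let ?S = "set (js @ [j])"
  let ?C = "{e \<in> ?S. \<mu> e \<noteq> 0}"
  have \<mu>j: "\<mu> j \<noteq> 0" using cramer_last[OF S(1,2)] d by (simp add: \<mu>_def)
  then show jC: "j \<in> ?C" by simp
  have rel: "linear_relation k b ?S \<mu>"
    using cramer_linear_relation[OF S(1)] S(2) by (simp add: \<mu>_def)
  have "linear_relation k b ?C \<mu>"
    using rel by (subst (asm) linear_relation_mono_neutral[of ?S ?C]) auto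
  then have "\<not> indep_set k b ?C" using jC \<mu>j by (auto simp: indep_set_iff)
  moreover have "indep_set k b D" if D: "D \<subset> ?C" for D
    unfolding indep_set_iff
  proof (intro allI impI ballI)
    fix \<nu> e assume \<nu>: "linear_relation k b D \<nu>" and e: "e \<in> D"
    let ?\<nu> = "\<lambda>e. if e \<in> D then \<nu> e else 0"
    have "linear_relation k b D ?\<nu>" using \<nu> by (simp add: linear_relation_def)
    then have rel_ext: "linear_relation k b ?S ?\<nu>"
      using D by (subst linear_relation_mono_neutral[of ?S D]) auto
    have propto: "?\<nu> e' * \<mu> j = ?\<nu> j * \<mu> e'" if "e' \<in> ?S" for e'
      unfolding \<mu>_def by (rule linear_relation_proportional_cramer[OF S(1,2) d rel_ext that])
    obtain e0 where "e0 \<in> ?C" "e0 \<notin> D" using D by blast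
    then have "?\<nu> j = 0" using propto[of e0] by auto
    then show "\<nu> e = 0" using propto[of e] e D \<mu>j by auto
  qed
  ultimately show "circuit k n b ?C" unfolding circuit_def using S(3) by blast
qed

locale circuit_relations =
  fixes k n :: nat and b :: "nat \<Rightarrow> nat \<Rightarrow> complex" and lam :: "nat set \<Rightarrow> nat \<Rightarrow> complex"
  assumes lam_supp: "\<And>C i. circuit k n b C \<Longrightarrow> i \<notin> C \<Longrightarrow> lam C i = 0"
    and lam_nonzero: "\<And>C. circuit k n b C \<Longrightarrow> \<exists>i. lam C i \<noteq> 0"
    and lam_rel: "\<And>C. circuit k n b C \<Longrightarrow> linear_relation k b {1..n} (lam C)"
begin

lemma lam_linear_relation:
  assumes C: "circuit k n b C" and S: "C \<subseteq> S" "finite S"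
  shows "linear_relation k b S (lam C)"
proof -
  have Cn: "C \<subseteq> {1..n}" using C by (simp add: circuit_def)
  have zero: "lam C e = 0" if "e \<notin> C" for e using lam_supp[OF C that] .
  have "linear_relation k b C (lam C)"
    using lam_rel[OF C] linear_relation_mono_neutral[where T = "{1..n}" and S = C and \<nu> = "lam C"] Cn zero
    by blast
  then show ?thesis
    using linear_relation_mono_neutral[where T = S and S = C and \<nu> = "lam C"] S zero by blast
qed

lemma support_lam:
  assumes C: "circuit k n b C"
  shows "{e. lam C e \<noteq> 0} = C"
proof (rule ccontr)
  let ?D = "{e. lam C e \<noteq> 0}"
  assume "?D \<noteq> C"
  moreover have sub: "?D \<subseteq> C" using lam_supp[OF C] by blast
  ultimately have indep: "indep_set k b ?D" using C unfolding circuit_def by blast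
  have "linear_relation k b C (lam C)"
    by (rule lam_linear_relation[OF C subset_refl finite_circuit[OF C]])
  then have "linear_relation k b ?D (lam C)"
    using linear_relation_mono_neutral[where T = C and S = ?D and \<nu> = "lam C"] finite_circuit[OF C] sub
    by blast
  then show False using indep lam_nonzero[OF C] unfolding indep_set_iff by blast
qed

lemma circuit_eq_cramer_support:
  assumes S: "distinct (js @ [j])" "length js = k" "dcoef k b js \<noteq> 0"
    and C: "circuit k n b C" "C \<subseteq> set (js @ [j])" "lam C j \<noteq> 0"
  shows "C = {e \<in> set (js @ [j]). cramer k b (js @ [j]) e \<noteq> 0}"
proof -
  let ?\<mu> = "cramer k b (js @ [j])"
  have \<mu>j: "?\<mu> j \<noteq> 0" using cramer_last[OF S(1,2)] S(3) by simp
  have "lam C e \<noteq> 0 \<longleftrightarrow> ?\<mu> e \<noteq> 0" if "e \<in> set (js @ [j])" for e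
    using linear_relation_proportional_cramer[OF S lam_linear_relation[OF C(1,2) finite_set] that] \<mu>j C(3)
    by (metis mult_eq_0_iff)
  then show ?thesis using support_lam[OF C(1)] C(2) by blast
qed

lemma unique_circuit_through:
  assumes S: "distinct (js @ [j])" "length js = k" "set (js @ [j]) \<subseteq> {1..n}" "dcoef k b js \<noteq> 0"
  obtains C0 where "circuit k n b C0" "C0 \<subseteq> set (js @ [j])" "lam C0 j \<noteq> 0"
    "\<And>C. circuit k n b C \<Longrightarrow> C \<subseteq> set (js @ [j]) \<Longrightarrow> lam C j \<noteq> 0 \<Longrightarrow> C = C0"
proof -
  let ?\<mu> = "cramer k b (js @ [j])"
  define C0 where "C0 = {e \<in> set (js @ [j]). ?\<mu> e \<noteq> 0}"
  have C0: "circuit k n b C0" "C0 \<subseteq> set (js @ [j])"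
    using circuit_cramer_support(1)[OF S] by (auto simp: C0_def)
  have "lam C0 j \<noteq> 0"
  proof
    assume "lam C0 j = 0"
    have "lam C0 e = 0" for e
    proof (cases "e \<in> set (js @ [j])")
      case True
      then show ?thesis
        using linear_relation_proportional_cramer[OF S(1,2,4) lam_linear_relation[OF C0 finite_set] True]
          \<open>lam C0 j = 0\<close> cramer_last[OF S(1,2)] S(4) by simp
    qed (use C0 lam_supp in blast)
    then show False using lam_nonzero[OF C0(1)] by blast
  qed
  then show ?thesis
    using that[OF C0] circuit_eq_cramer_support[OF S(1,2,4)] by (simp add: C0_def)
qed

end

locale off_discriminant = circuit_relations +
  fixes x :: "nat \<Rightarrow> complex"
  assumes fC_nonzero: "\<And>C. circuit k n b C \<Longrightarrow> fC lam n C x \<noteq> 0"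
begin

lemma fC_eq_sum:
  assumes "circuit k n b C" "C \<subseteq> S" "S \<subseteq> {1..n}"
  shows "fC lam n C x = (\<Sum>e\<in>S. lam C e * x e)"
  unfolding fC_def using assms lam_supp by (intro sum.mono_neutral_right) auto

text \<open>The kernel vector is z = beta lam_C - f_C(x) nu for a relation nu among the columns js;
  the condition f_C(x) \<noteq> 0 is what makes it nonzero.\<close>

lemma xdet_eq_0_if_dcoef_eq_0:
  assumes S: "distinct (js @ [j])" "length js = k" "set (js @ [j]) \<subseteq> {1..n}"
    and d: "dcoef k b js = 0"
    and C: "circuit k n b C" "C \<subseteq> set (js @ [j])" "lam C j \<noteq> 0"
  shows "xdet k b x (js @ [j]) = 0"
proof -
  let ?S = "set (js @ [j])"
  obtain c where c: "linear_relation k b (set js) c" "\<exists>e\<in>set js. c e \<noteq> 0"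
    using d S dcoef_eq_0_iff_dependent[of js k b] by (auto simp: indep_set_iff)
  define \<nu> where "\<nu> e = (if e \<in> set js then c e else 0)" for e
  have \<nu>: "linear_relation k b ?S \<nu>"
    using c(1) S(1)
    by (subst linear_relation_mono_neutral[of _ "set js"]) (auto simp: \<nu>_def linear_relation_def)
  define F where "F = fC lam n C x"
  define \<beta> where "\<beta> = (\<Sum>e\<in>?S. \<nu> e * x e)"
  define z where "z e = \<beta> * lam C e - F * \<nu> e" for e
  have F: "F \<noteq> 0" "F = (\<Sum>e\<in>?S. lam C e * x e)"
    using fC_nonzero[OF C(1)] fC_eq_sum[OF C(1,2) S(3)] by (simp_all add: F_def)
  have "linear_relation k b ?S z"
    unfolding z_def using linear_relation_lincomb[OF lam_linear_relation[OF C(1,2)] \<nu>, of \<beta> "- F"]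
    by simp
  moreover have "(\<Sum>e\<in>?S. z e * x e) = \<beta> * (\<Sum>e\<in>?S. lam C e * x e) - F * (\<Sum>e\<in>?S. \<nu> e * x e)"
    by (simp add: z_def algebra_simps sum_subtractf sum_distrib_left)
  then have "(\<Sum>e\<in>?S. z e * x e) = 0"
    using F(2) by (simp add: \<beta>_def)
  moreover have "\<exists>e\<in>?S. z e \<noteq> 0"
  proof (cases "\<beta> = 0")
    case True
    then show ?thesis using c(2) F(1) by (force simp: z_def \<nu>_def)
  next
    case False
    have "\<nu> j = 0" using S(1) by (simp add: \<nu>_def)
    then show ?thesis using False C(3) by (auto simp: z_def)
  qed
  ultimately show ?thesis using S(1,2) by (intro xdet_eq_0_if_relation) simp_all
qed

lemma Kop_term_nonzero_imp:
  assumes C: "circuit k n b C" "lam C j \<noteq> 0" "LC k b x a C js t \<noteq> 0" and j: "j \<notin> set js"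
  shows "j \<in> C" "set js \<inter> C = C - {j}"
proof -
  show "j \<in> C" using lam_supp[OF C(1)] C(2) by blast
  moreover obtain c where "c \<in> C" "set js \<inter> C = C - {c}"
    using LC_nonzero_imp[OF finite_circuit[OF C(1)] C(3)] by blast
  ultimately show "set js \<inter> C = C - {j}" using j by blast
qed

lemma fC_mult_cramer:
  assumes S: "distinct (js @ [j])" "length js = k" "set (js @ [j]) \<subseteq> {1..n}" "dcoef k b js \<noteq> 0"
    and C: "circuit k n b C" "C \<subseteq> set (js @ [j])"
  shows "cramer k b (js @ [j]) j * fC lam n C x = lam C j * xdet k b x (js @ [j])"
proof -
  let ?S = "set (js @ [j])" and ?\<mu> = "cramer k b (js @ [j])"
  have "?\<mu> j * fC lam n C x = (\<Sum>e\<in>?S. lam C e * ?\<mu> j * x e)"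
    by (simp add: fC_eq_sum[OF C S(3)] sum_distrib_left mult_ac)
  also have "\<dots> = (\<Sum>e\<in>?S. lam C j * (?\<mu> e * x e))"
    using linear_relation_proportional_cramer[OF S(1,2,4) lam_linear_relation[OF C finite_set]]
    by (intro sum.cong refl) (simp add: mult.assoc)
  also have "\<dots> = lam C j * xdet k b x (js @ [j])"
    using sum_cramer_x[OF S(1), of k b x] S(2) by (simp flip: sum_distrib_left)
  finally show ?thesis .
qed

lemma Kop_summand_eq:
  assumes js: "distinct js" "length js = k" "set js \<subseteq> {1..n}" and j: "j \<in> {1..n}" "j \<notin> set js"
    and t: "t \<in> complU k n b x" and C: "circuit k n b C"
  shows "lam C j / fC lam n C x * LC k b x a C js t =
    (if lam C j \<noteq> 0 \<and> C \<subseteq> insert j (set js)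
     then lam C j / fC lam n C x * ((-1) ^ k * xdet k b x (js @ [j]) *
       (\<Prod>e\<in>insert j (set js). a e / ffun k b x e t))
     else 0)"
proof (cases "lam C j \<noteq> 0 \<and> C \<subseteq> insert j (set js)")
  case True
  then have "j \<in> C" using lam_supp[OF C] by blast
  then have "set js \<inter> C = C - {j}" using True j(2) by blast
  then show ?thesis using True LC_eq_xdet[OF C \<open>j \<in> C\<close> js j(2) _ t] by simp
next
  case False
  have "LC k b x a C js t = 0" if "lam C j \<noteq> 0"
    using Kop_term_nonzero_imp[OF C that _ j(2)] False that by blast
  then show ?thesis using False by auto
qed

lemma weight_mult_wfun_eq_Kop:
  assumes js: "distinct js" "length js = k" "set js \<subseteq> {1..n}" and j: "j \<in> {1..n}" "j \<notin> set js"
    and t: "t \<in> complU k n b x"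
  shows "a j / ffun k b x j t * wfun k b x a js t = Kop k n b x a lam j js t"
proof -
  let ?S = "js @ [j]" and ?P = "\<Prod>e\<in>insert j (set js). a e / ffun k b x e t"
  let ?term = "\<lambda>C. lam C j / fC lam n C x * ((-1) ^ k * xdet k b x ?S * ?P)"
  let ?contributes = "\<lambda>C. circuit k n b C \<and> lam C j \<noteq> 0 \<and> C \<subseteq> set ?S"
  have S: "distinct ?S" "set ?S \<subseteq> {1..n}" using js j by auto
  have lhs: "a j / ffun k b x j t * wfun k b x a js t = dcoef k b js * ?P"
    using j(2) by (simp add: wfun_distinct[OF js(1)])
  have Kop: "Kop k n b x a lam j js t = (\<Sum>C | circuit k n b C. if ?contributes C then ?term C else 0)"
    unfolding Kop_def using Kop_summand_eq[OF js j t] by (intro sum.cong) auto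
  show ?thesis
  proof (cases "dcoef k b js = 0")
    case True
    have "xdet k b x ?S = 0" if "?contributes C" for C
      using xdet_eq_0_if_dcoef_eq_0[OF S(1) js(2) S(2) True] that by blast
    then have "?term C = 0" if "?contributes C" for C
      using that by simp
    then have "Kop k n b x a lam j js t = 0" unfolding Kop by (intro sum.neutral) auto
    then show ?thesis unfolding lhs True by simp
  next
    case False
    obtain C0 where C0: "circuit k n b C0" "C0 \<subseteq> set ?S" "lam C0 j \<noteq> 0"
      and unique: "\<And>C. circuit k n b C \<Longrightarrow> C \<subseteq> set ?S \<Longrightarrow> lam C j \<noteq> 0 \<Longrightarrow> C = C0"
      by (rule unique_circuit_through[OF S(1) js(2) S(2) False]) blast
    have contrib: "(if ?contributes C then ?term C else 0) = (if C = C0 then ?term C0 else 0)"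
      if "circuit k n b C" for C
    proof (cases "C = C0")
      case False
      then have "\<not> ?contributes C" using unique that by blast
      then show ?thesis using False by (simp only: if_False)
    qed (use C0 in simp)
    have "Kop k n b x a lam j js t = (\<Sum>C | circuit k n b C. if C = C0 then ?term C0 else 0)"
      unfolding Kop by (intro sum.cong refl contrib) simp
    also have "\<dots> = ?term C0" using C0(1) by (simp add: sum.delta[OF finite_circuits])
    also have "\<dots> = dcoef k b js * ?P"
      using fC_mult_cramer[OF S(1) js(2) S(2) False C0(1,2)] cramer_last[OF S(1) js(2)]
      by (intro sign_cancel_divide fC_nonzero[OF C0(1)] power_neg_one_square) simp
    finally show ?thesis using lhs by simp
  qed
qed

end

section \<open>The ideal generated by the dPhi/dt_i\<close>

definition in_ideal :: "nat \<Rightarrow> nat \<Rightarrow> (nat \<Rightarrow> nat \<Rightarrow> complex) \<Rightarrow> (nat \<Rightarrow> complex) \<Rightarrow> (nat \<Rightarrow> complex)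
    \<Rightarrow> ((nat \<Rightarrow> complex) \<Rightarrow> complex) \<Rightarrow> bool" where
  "in_ideal k n b x a F \<longleftrightarrow> same_class k n b x a F (\<lambda>t. 0)"

lemma same_class_iff_in_ideal: "same_class k n b x a p q \<longleftrightarrow> in_ideal k n b x a (\<lambda>t. p t - q t)"
  by (simp add: in_ideal_def same_class_def)

lemma in_ideal_iff:
  "in_ideal k n b x a F \<longleftrightarrow> (\<exists>c. (\<forall>i\<in>{1..k}. c i \<in> regfun k n b x) \<and>
     (\<forall>t\<in>complU k n b x. F t = (\<Sum>i=1..k. c i t * dPhi k n b x a i t)))"
  by (simp add: in_ideal_def same_class_def)

lemma in_ideal_cong:
  "in_ideal k n b x a F \<Longrightarrow> (\<And>t. t \<in> complU k n b x \<Longrightarrow> F t = G t) \<Longrightarrow>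
    in_ideal k n b x a G"
  unfolding in_ideal_iff by metis

lemma in_ideal_zero: "(\<And>t. t \<in> complU k n b x \<Longrightarrow> F t = 0) \<Longrightarrow> in_ideal k n b x a F"
  unfolding in_ideal_iff by (rule exI[of _ "\<lambda>i t. 0"]) (auto intro: regfun.rf_const)

lemma in_ideal_add:
  assumes "in_ideal k n b x a F" "in_ideal k n b x a G"
  shows "in_ideal k n b x a (\<lambda>t. F t + G t)"
proof -
  obtain c d where
    c: "\<forall>i\<in>{1..k}. c i \<in> regfun k n b x"
      "\<forall>t\<in>complU k n b x. F t = (\<Sum>i=1..k. c i t * dPhi k n b x a i t)" and
    d: "\<forall>i\<in>{1..k}. d i \<in> regfun k n b x"
      "\<forall>t\<in>complU k n b x. G t = (\<Sum>i=1..k. d i t * dPhi k n b x a i t)"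
    using assms unfolding in_ideal_iff by blast
  show ?thesis unfolding in_ideal_iff
    by (rule exI[of _ "\<lambda>i t. c i t + d i t"])
       (use c d in \<open>auto intro: regfun.rf_add simp: sum.distrib distrib_right\<close>)
qed

lemma in_ideal_mult:
  assumes "g \<in> regfun k n b x" "in_ideal k n b x a F"
  shows "in_ideal k n b x a (\<lambda>t. g t * F t)"
proof -
  obtain c where
    c: "\<forall>i\<in>{1..k}. c i \<in> regfun k n b x"
      "\<forall>t\<in>complU k n b x. F t = (\<Sum>i=1..k. c i t * dPhi k n b x a i t)"
    using assms(2) unfolding in_ideal_iff by blast
  show ?thesis unfolding in_ideal_iff
    by (rule exI[of _ "\<lambda>i t. g t * c i t"])
       (use c assms(1) in \<open>auto intro: regfun.rf_mult simp: sum_distrib_left mult.assoc\<close>)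
qed

lemma in_ideal_diff:
  assumes "in_ideal k n b x a F" "in_ideal k n b x a G"
  shows "in_ideal k n b x a (\<lambda>t. F t - G t)"
  using in_ideal_add[OF assms(1) in_ideal_mult[OF regfun.rf_const[of "-1"] assms(2)]] by simp

lemma in_ideal_sum:
  "finite S \<Longrightarrow> (\<And>s. s \<in> S \<Longrightarrow> in_ideal k n b x a (F s)) \<Longrightarrow>
    in_ideal k n b x a (\<lambda>t. \<Sum>s\<in>S. F s t)"
  by (induction S rule: finite_induct) (auto intro: in_ideal_zero in_ideal_add)

lemma in_ideal_dPhi:
  assumes "i \<in> {1..k}"
  shows "in_ideal k n b x a (dPhi k n b x a i)"
proof -
  have "{1..k} \<inter> {i'. i' = i} = {i}" using assms by auto
  then show ?thesis unfolding in_ideal_iff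
    by (intro exI[of _ "\<lambda>i' t. of_bool (i' = i)"]) (auto intro: regfun.rf_const)
qed

lemma regfun_prod:
  "finite S \<Longrightarrow> (\<And>s. s \<in> S \<Longrightarrow> g s \<in> regfun k n b x) \<Longrightarrow>
    (\<lambda>t. \<Prod>s\<in>S. g s t) \<in> regfun k n b x"
  by (induction S rule: finite_induct) (auto intro: regfun.rf_const regfun.rf_mult)

lemma regfun_weight_div:
  assumes "j \<in> {1..n}"
  shows "(\<lambda>t. a j / ffun k b x j t) \<in> regfun k n b x"
proof -
  have "(\<lambda>t. a j * (1 / ffun k b x j t)) \<in> regfun k n b x"
    by (intro regfun.rf_mult regfun.rf_const regfun.rf_inv assms)
  then show ?thesis by simp
qed

section \<open>Replacing one index of a marked element\<close>

lemma sum_wfun_list_update_in_ideal: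
  assumes js: "length js = k" "set js \<subseteq> {1..n}" and q: "q < k"
  shows "in_ideal k n b x a (\<lambda>t. \<Sum>l=1..n. wfun k b x a (js[q := l]) t)"
proof -
  let ?u = "\<lambda>e t. a e / ffun k b x e t"
  define \<gamma> where "\<gamma> i = cofactor (col_matrix k (\<lambda>i. b (Suc i)) js) i q" for i
  define Q where "Q t = (\<Prod>p\<in>{..<k} - {q}. ?u (js ! p) t)" for t
  have wfun_update: "wfun k b x a (js[q := l]) t = (\<Sum>i<k. b (Suc i) l * \<gamma> i) * (?u l t * Q t)" for l t
  proof -
    have d: "dcoef k b (js[q := l]) = (\<Sum>i<k. b (Suc i) l * \<gamma> i)"
      unfolding dcoef_eq_col_det \<gamma>_def by (rule col_det_list_update[OF js(1) q])
    have "(\<Prod>p<length (js[q := l]). ?u (js[q := l] ! p) t)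
        = ?u (js[q := l] ! q) t * (\<Prod>p\<in>{..<k} - {q}. ?u (js[q := l] ! p) t)"
      using js(1) q by (simp add: prod.remove)
    moreover have "(\<Prod>p\<in>{..<k} - {q}. ?u (js[q := l] ! p) t) = Q t"
      unfolding Q_def by (intro prod.cong refl) simp
    ultimately show ?thesis unfolding wfun_def d using js(1) q by simp
  qed
  have "(\<Sum>l=1..n. wfun k b x a (js[q := l]) t) = (\<Sum>i<k. (\<gamma> i * Q t) * dPhi k n b x a (Suc i) t)" for t
    unfolding wfun_update dPhi_def sum_distrib_left sum_distrib_right
    by (subst sum.swap) (simp add: mult_ac)
  moreover have "(\<lambda>t. \<gamma> i * Q t) \<in> regfun k n b x" for i
    using js q unfolding Q_def
    by (intro regfun.rf_mult regfun.rf_const regfun_prod regfun_weight_div) (auto simp: subset_iff)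
  then have "in_ideal k n b x a (\<lambda>t. \<Sum>i<k. (\<gamma> i * Q t) * dPhi k n b x a (Suc i) t)"
    by (intro in_ideal_sum in_ideal_mult in_ideal_dPhi) auto
  ultimately show ?thesis by simp
qed

lemma distinct_list_update_iff:
  assumes "distinct js" "q < length js"
  shows "distinct (js[q := l]) \<longleftrightarrow> l \<notin> set js - {js ! q}"
proof
  assume "distinct (js[q := l])"
  show "l \<notin> set js - {js ! q}"
  proof
    assume "l \<in> set js - {js ! q}"
    then obtain p where p: "p < length js" "js ! p = l" "p \<noteq> q" by (auto simp: in_set_conv_nth)
    then show False
      using nth_eq_iff_index_eq[OF \<open>distinct (js[q := l])\<close>, of p q] assms(2) by simp
  qed
qed (use assms in \<open>simp add: distinct_list_update\<close>)

lemma Int_insert_Diff_cases: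
  assumes j: "j \<in> C" "j \<in> A" and c: "c \<in> C" "insert l (A - {j}) \<inter> C = C - {c}"
    and l: "l \<notin> A - {j}"
  shows "C \<subseteq> A \<or> (\<exists>c1\<in>C. c1 \<noteq> j \<and> (A - {j}) \<inter> C = C - {j, c1})"
proof -
  have mem: "e = l \<or> e \<in> A - {j} \<longleftrightarrow> e \<noteq> c" if "e \<in> C" for e
    using c(2) that by (simp add: set_eq_iff) metis
  show ?thesis
  proof (cases "l = j")
    case True
    then have "c \<noteq> j" using mem[OF j(1)] by simp
    moreover have "(A - {j}) \<inter> C = C - {j, c}" using mem True by auto
    ultimately show ?thesis using c(1) by (intro disjI2 bexI[of _ c]) simp_all
  next
    case False
    then have cj: "c = j" using mem[OF j(1)] by simp
    show ?thesis
    proof (cases "l \<in> C")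
      case True
      then have "(A - {j}) \<inter> C = C - {j, l}" using mem cj l by auto
      then show ?thesis using True False by blast
    next
      case False
      then have "C \<subseteq> A" using mem cj j(2) by auto
      then show ?thesis by blast
    qed
  qed
qed

lemma Int_insert_Diff_two_missing:
  assumes "j \<in> C" "c1 \<in> C" "c1 \<noteq> j" "(A - {j}) \<inter> C = C - {j, c1}"
    "insert l (A - {j}) \<inter> C = C - {c}"
  shows "l = j \<or> l = c1"
proof (rule ccontr)
  assume l: "\<not> (l = j \<or> l = c1)"
  have "j \<notin> insert l (A - {j}) \<inter> C" using l by auto
  then have "c = j" using assms(1,5) by (simp add: set_eq_iff)
  then have "c1 \<in> insert l (A - {j}) \<inter> C" using assms(2,3,5) l by (simp add: set_eq_iff) metis
  then show False using assms(4) l by (simp add: set_eq_iff) metis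
qed

lemma Int_eq_Diff_if_Diff_Int:
  assumes "j \<in> A" "j \<in> C" "c1 \<noteq> j" "(A - {j}) \<inter> C = C - {j, c1}"
  shows "A \<inter> C = C - {c1}"
  using assms by (simp add: set_eq_iff) metis

context
  fixes k n :: nat and b :: "nat \<Rightarrow> nat \<Rightarrow> complex" and x a :: "nat \<Rightarrow> complex"
    and C :: "nat set" and js :: "nat list" and q j :: nat
  assumes C: "circuit k n b C" "j \<in> C"
    and js: "distinct js" "length js = k" "set js \<subseteq> {1..n}" and q: "q < k" "js ! q = j"
begin

lemma j_in_js: "j \<in> set js"
  using nth_mem[of q js] q js(2) by simp

lemma set_js_update: "set (js[q := l]) = insert l (set js - {j})"
  using set_update_distinct[OF js(1)] q js(2) by simp

lemma js_update_j: "js[q := j] = js"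
  using list_update_id[of js q] q(2) by simp

lemma distinct_js_update: "distinct (js[q := l]) \<longleftrightarrow> l \<notin> set js - {j}"
  using distinct_list_update_iff[OF js(1)] q js(2) by simp

lemma LC_list_update_nonzero_imp:
  assumes "LC k b x a C (js[q := l]) t \<noteq> 0"
  shows "C \<subseteq> set js \<or> (\<exists>c1\<in>C. c1 \<noteq> j \<and> (set js - {j}) \<inter> C = C - {j, c1})"
proof -
  note nonzero = LC_nonzero_imp[OF finite_circuit[OF C(1)] assms]
  then obtain c where c: "c \<in> C" "set (js[q := l]) \<inter> C = C - {c}" by blast
  show ?thesis
    using Int_insert_Diff_cases[OF C(2) j_in_js c(1) c(2)[unfolded set_js_update]]
      nonzero[THEN conjunct1, unfolded distinct_js_update] .
qed

lemma LC_list_update_pair_cancel: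
  assumes c1: "c1 \<in> C" "c1 \<noteq> j" "(set js - {j}) \<inter> C = C - {j, c1}" and t: "t \<in> complU k n b x"
  shows "LC k b x a C js t + LC k b x a C (js[q := c1]) t = 0"
proof -
  have c1js: "c1 \<notin> set js" and Cn: "C \<subseteq> {1..n}"
    using c1 C by (auto simp: circuit_def)
  have js': "distinct (js[q := c1])" "length (js[q := c1]) = k" "set (js[q := c1]) \<subseteq> {1..n}"
    "j \<notin> set (js[q := c1])"
    using c1js c1(1,2) Cn js by (auto simp: distinct_js_update set_js_update)
  have C_js': "set (js[q := c1]) \<inter> C = C - {j}"
    using c1 unfolding set_js_update by (auto simp: set_eq_iff)
  have swap: "(js @ [c1])[q := (js @ [c1]) ! k, k := (js @ [c1]) ! q] = js[q := c1] @ [j]"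
    using q js(2) by (simp add: list_update_append nth_append)
  have "xdet k b x (js[q := c1] @ [j]) = - xdet k b x (js @ [c1])"
    unfolding xdet_def swap[symmetric] by (rule col_det_swap) (use q js(2) in auto)
  moreover have "insert j (set (js[q := c1])) = insert c1 (set js)"
    using set_js_update j_in_js by blast
  moreover have "set js \<inter> C = C - {c1}" using Int_eq_Diff_if_Diff_Int[OF j_in_js C(2) c1(2,3)] .
  ultimately show ?thesis
    using LC_eq_xdet[OF C(1) c1(1) js c1js _ t] LC_eq_xdet[OF C(1,2) js' C_js' t] by simp
qed

lemma sum_LC_list_update_cancel:
  assumes c1: "c1 \<in> C" "c1 \<noteq> j" "(set js - {j}) \<inter> C = C - {j, c1}" and t: "t \<in> complU k n b x"
  shows "(\<Sum>l=1..n. LC k b x a C (js[q := l]) t) = 0"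
proof -
  have zero: "LC k b x a C (js[q := l]) t = 0" if "l \<notin> {j, c1}" for l
  proof (rule ccontr)
    assume "LC k b x a C (js[q := l]) t \<noteq> 0"
    then obtain c where "set (js[q := l]) \<inter> C = C - {c}"
      using LC_nonzero_imp[OF finite_circuit[OF C(1)]] by blast
    then have "l = j \<or> l = c1"
      by (rule Int_insert_Diff_two_missing[OF C(2) c1(1,2,3), unfolded set_js_update[symmetric]])
    then show False using that by simp
  qed
  have "(\<Sum>l=1..n. LC k b x a C (js[q := l]) t) = (\<Sum>l\<in>{j, c1}. LC k b x a C (js[q := l]) t)"
  proof (rule sum.mono_neutral_right)
    have "C \<subseteq> {1..n}" using C(1) by (simp add: circuit_def)
    then show "{j, c1} \<subseteq> {1..n}" using C(2) c1(1) by blast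
    show "\<forall>l\<in>{1..n} - {j, c1}. LC k b x a C (js[q := l]) t = 0" using zero by blast
  qed simp
  also have "\<dots> = LC k b x a C js t + LC k b x a C (js[q := c1]) t"
    using c1(2) by (simp add: js_update_j)
  also have "\<dots> = 0" by (rule LC_list_update_pair_cancel[OF c1 t])
  finally show ?thesis .
qed

lemma LC_list_update_eq_if_subset:
  assumes CS: "C \<subseteq> set js" and t: "t \<in> complU k n b x" and l: "l \<in> {1..n}"
  shows "LC k b x a C (js[q := l]) t = (-1) ^ k * xdet k b x (js[q := l] @ [j]) *
    (a l / ffun k b x l t * (\<Prod>e\<in>set js. a e / ffun k b x e t))"
proof (cases "l \<in> set js")
  case True
  have "\<not> distinct (js[q := l] @ [j])"
    using True j_in_js by (cases "l = j") (auto simp: js_update_j distinct_js_update)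
  then have "xdet k b x (js[q := l] @ [j]) = 0"
    unfolding xdet_def by (intro col_det_not_distinct) (simp_all add: js(2))
  moreover have "LC k b x a C (js[q := l]) t = 0"
  proof (rule ccontr)
    assume "LC k b x a C (js[q := l]) t \<noteq> 0"
    then obtain c where "c \<in> C" "set (js[q := l]) \<inter> C = C - {c}" "distinct (js[q := l])"
      using LC_nonzero_imp[OF finite_circuit[OF C(1)]] by blast
    then show False using True CS by (cases "l = j") (auto simp: js_update_j distinct_js_update)
  qed
  ultimately show ?thesis by simp
next
  case False
  have js': "distinct (js[q := l])" "length (js[q := l]) = k" "set (js[q := l]) \<subseteq> {1..n}"
      "j \<notin> set (js[q := l])"
    using False l js j_in_js by (auto simp: distinct_js_update set_js_update)
  have "set (js[q := l]) \<inter> C = C - {j}"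
    using False CS unfolding set_js_update by blast
  moreover have "insert j (set (js[q := l])) = insert l (set js)"
    using j_in_js unfolding set_js_update by blast
  ultimately show ?thesis using LC_eq_xdet[OF C(1,2) js' _ t] False by simp
qed

lemma sum_LC_list_update_in_ideal_if_subset:
  assumes CS: "C \<subseteq> set js"
  shows "in_ideal k n b x a (\<lambda>t. \<Sum>l=1..n. LC k b x a C (js[q := l]) t)"
proof -
  let ?X = "\<lambda>i e. if i = 0 then x e else b i e"
  define cof where "cof i = cofactor (col_matrix (Suc k) ?X (js @ [j])) i q" for i
  define R where "R t = (\<Prod>e\<in>set js. a e / ffun k b x e t)" for t
  have len: "length (js @ [j]) = Suc k" "q < Suc k" using js(2) q by simp_all
  have "dcoef k b (remove_nth q (js @ [j])) = 0"
  proof (rule dcoef_eq_0_if_dependent)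
    have "remove_nth q (js @ [j]) = remove_nth q js @ [j]" using q js(2) by (simp add: remove_nth_append)
    moreover have "set (remove_nth q js) = set js - {j}" using set_remove_nth[OF js(1)] q js(2) by simp
    ultimately show "distinct (remove_nth q (js @ [j]))" "C \<subseteq> set (remove_nth q (js @ [j]))"
      using distinct_remove_nth[OF js(1)] CS j_in_js by auto
    show "length (remove_nth q (js @ [j])) = k" using len by simp
  qed (use C(1) in \<open>simp add: circuit_def\<close>)
  then have cof0: "cof 0 = 0"
    unfolding cof_def cofactor_col_matrix_first_row[OF len] by (simp add: dcoef_eq_col_det)
  have xdet_update: "xdet k b x (js[q := l] @ [j]) = (\<Sum>i<k. b (Suc i) l * cof (Suc i))" for l
  proof -
    have "js[q := l] @ [j] = (js @ [j])[q := l]" using q js(2) by (simp add: list_update_append)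
    then have "xdet k b x (js[q := l] @ [j]) = (\<Sum>i<Suc k. ?X i l * cof i)"
      unfolding xdet_def cof_def by (simp add: col_det_list_update[OF len])
    then show ?thesis unfolding sum.lessThan_Suc_shift using cof0 by simp
  qed
  have eq: "(\<Sum>l=1..n. LC k b x a C (js[q := l]) t)
      = (\<Sum>i<k. ((-1) ^ k * cof (Suc i) * R t) * dPhi k n b x a (Suc i) t)" if t: "t \<in> complU k n b x" for t
    unfolding dPhi_def sum_distrib_left
    by (subst sum.swap, intro sum.cong refl)
       (simp add: LC_list_update_eq_if_subset[OF CS t] xdet_update R_def sum_distrib_left sum_distrib_right sum_divide_distrib mult_ac)
  have ideal: "in_ideal k n b x a (\<lambda>t. \<Sum>i<k. ((-1) ^ k * cof (Suc i) * R t) * dPhi k n b x a (Suc i) t)"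
    using js(3) unfolding R_def
    by (intro in_ideal_sum in_ideal_mult in_ideal_dPhi regfun.rf_mult regfun.rf_const regfun_prod
        regfun_weight_div) auto
  show ?thesis by (rule in_ideal_cong[OF ideal]) (simp only: eq)
qed

lemma sum_LC_list_update_in_ideal:
  "in_ideal k n b x a (\<lambda>t. \<Sum>l=1..n. LC k b x a C (js[q := l]) t)"
proof (cases "C \<subseteq> set js")
  case True
  then show ?thesis by (rule sum_LC_list_update_in_ideal_if_subset)
next
  case not_subset: False
  show ?thesis
  proof (cases "\<exists>c1\<in>C. c1 \<noteq> j \<and> (set js - {j}) \<inter> C = C - {j, c1}")
    case True
    then show ?thesis using sum_LC_list_update_cancel by (auto intro: in_ideal_zero)
  next
    case False
    then have "LC k b x a C (js[q := l]) t = 0" for l t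
      using LC_list_update_nonzero_imp not_subset by blast
    then show ?thesis by (intro in_ideal_zero) simp
  qed
qed

end

context off_discriminant
begin

lemma weight_mult_wfun_eq_Kop_if_not_mem:
  assumes js: "length js = k" "set js \<subseteq> {1..n}" "\<not> (distinct js \<and> j \<in> set js)" and j: "j \<in> {1..n}"
    and t: "t \<in> complU k n b x"
  shows "a j / ffun k b x j t * wfun k b x a js t = Kop k n b x a lam j js t"
  using weight_mult_wfun_eq_Kop[OF _ js(1,2) j _ t] js(3) wfun_not_distinct[OF js(1)] Kop_not_distinct
  by (cases "distinct js") auto

lemma sum_Kop_list_update_in_ideal:
  assumes js: "distinct js" "length js = k" "set js \<subseteq> {1..n}" and q: "q < k" "js ! q = j"
  shows "in_ideal k n b x a (\<lambda>t. \<Sum>l=1..n. Kop k n b x a lam j (js[q := l]) t)"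
proof -
  have "in_ideal k n b x a (\<lambda>t. \<Sum>C | circuit k n b C.
      lam C j / fC lam n C x * (\<Sum>l=1..n. LC k b x a C (js[q := l]) t))"
  proof (rule in_ideal_sum[OF finite_circuits])
    fix C assume C: "C \<in> {C. circuit k n b C}"
    show "in_ideal k n b x a (\<lambda>t. lam C j / fC lam n C x * (\<Sum>l=1..n. LC k b x a C (js[q := l]) t))"
    proof (cases "lam C j = 0")
      case False
      then have "j \<in> C" using lam_supp C by blast
      with C show ?thesis
        by (intro in_ideal_mult[OF regfun.rf_const] sum_LC_list_update_in_ideal js q) (simp_all add: q(2))
    qed (simp add: in_ideal_zero)
  qed
  moreover have "(\<Sum>C | circuit k n b C. lam C j / fC lam n C x * (\<Sum>l=1..n. LC k b x a C (js[q := l]) t))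
      = (\<Sum>l=1..n. Kop k n b x a lam j (js[q := l]) t)" for t
    unfolding Kop_def sum_distrib_left by (rule sum.swap)
  ultimately show ?thesis by simp
qed

lemma weight_mult_wfun_minus_Kop_in_ideal:
  assumes js: "distinct js" "length js = k" "set js \<subseteq> {1..n}" and j: "j \<in> set js"
  shows "in_ideal k n b x a (\<lambda>t. a j / ffun k b x j t * wfun k b x a js t - Kop k n b x a lam j js t)"
proof -
  obtain q where q: "q < k" "js ! q = j" using j js(2) by (metis in_set_conv_nth)
  have jn: "j \<in> {1..n}" using j js(3) by blast
  let ?D = "\<lambda>l t. a j / ffun k b x j t * wfun k b x a (js[q := l]) t - Kop k n b x a lam j (js[q := l]) t"
  have "in_ideal k n b x a (\<lambda>t. a j / ffun k b x j t * (\<Sum>l=1..n. wfun k b x a (js[q := l]) t))"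
    by (rule in_ideal_mult[OF regfun_weight_div[OF jn] sum_wfun_list_update_in_ideal[OF js(2,3) q(1)]])
  then have sum_in_ideal: "in_ideal k n b x a (\<lambda>t. \<Sum>l=1..n. ?D l t)"
    unfolding sum_subtractf sum_distrib_left
    by (rule in_ideal_diff[OF _ sum_Kop_list_update_in_ideal[OF js q]])
  have "?D l t = 0" if "l \<in> {1..n} - {j}" "t \<in> complU k n b x" for l t
    using that js q set_update_distinct[OF js(1), of q l]
    by (intro weight_mult_wfun_eq_Kop_if_not_mem[OF _ _ _ jn, THEN right_minus_eq[THEN iffD2]]) auto
  then have "(\<Sum>l=1..n. ?D l t) = (\<Sum>l\<in>{j}. ?D l t)" if "t \<in> complU k n b x" for t
    using jn that by (intro sum.mono_neutral_right) auto
  then show ?thesis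
    using in_ideal_cong[OF sum_in_ideal] list_update_id[of js q] q(2) by simp
qed

end

theorem corollary3p9:
  fixes k n :: nat
    and b :: "nat \<Rightarrow> nat \<Rightarrow> complex"
    and x a :: "nat \<Rightarrow> complex"
    and lam :: "nat set \<Rightarrow> nat \<Rightarrow> complex"
  assumes kn: "0 < k" "k < n"
    and g_nonzero: "\<forall>j\<in>{1..n}. \<exists>i\<in>{1..k}. b i j \<noteq> 0"
    and g_span: "\<forall>\<phi> :: nat \<Rightarrow> complex. \<exists>c :: nat \<Rightarrow> complex.
                   \<forall>i\<in>{1..k}. \<phi> i = (\<Sum>j=1..n. c j * b i j)"
    and lam_supp: "\<forall>C. circuit k n b C \<longrightarrow> (\<forall>i. i \<notin> C \<longrightarrow> lam C i = 0)"
    and lam_nonzero: "\<forall>C. circuit k n b C \<longrightarrow> (\<exists>i. lam C i \<noteq> 0)"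
    and lam_rel: "\<forall>C. circuit k n b C \<longrightarrow> (\<forall>i\<in>{1..k}. (\<Sum>j=1..n. lam C j * b i j) = 0)"
    and x_notin_Delta: "\<forall>C. circuit k n b C \<longrightarrow> fC lam n C x \<noteq> 0"
    and a_nonzero: "\<forall>j\<in>{1..n}. a j \<noteq> 0"
    and unbal: "unbalanced k n b x a"
  shows "\<forall>j\<in>{1..n}. \<forall>js. length js = k \<and> set js \<subseteq> {1..n} \<longrightarrow>
           same_class k n b x a
             (\<lambda>t. a j / ffun k b x j t * wfun k b x a js t)
             (Kop k n b x a lam j js)"
proof -
  interpret off_discriminant k n b lam x
    using lam_supp lam_nonzero lam_rel x_notin_Delta
    by unfold_locales (auto simp: linear_relation_def)
  show ?thesis
    unfolding same_class_iff_in_ideal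
  proof (intro ballI allI impI)
    fix j js assume j: "j \<in> {1..n}" and js: "length js = k \<and> set js \<subseteq> {1..n}"
    show "in_ideal k n b x a (\<lambda>t. a j / ffun k b x j t * wfun k b x a js t - Kop k n b x a lam j js t)"
    proof (cases "distinct js \<and> j \<in> set js")
      case True
      then show ?thesis using weight_mult_wfun_minus_Kop_in_ideal js by blast
    next
      case False
      then show ?thesis
        using weight_mult_wfun_eq_Kop_if_not_mem[OF _ _ False j] js by (intro in_ideal_zero) simp
    qed
  qed
qed

end
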